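(* Let $G$ be a connected graph. The interval function $I_G$ satisfies the axioms $(J0')$ and $(br)$ if and only if $G$ is a bridged graph.
   Context: Graphs are finite, simple and connected; $d$ is the shortest-path distance and $I_G(u,v)=\{w: d(u,w)+d(w,v)=d(u,v)\}$. A graph is bridged if it has no isometric cycle of length greater than $3$. For a map $R:V\times V\to 2^V$: $(J0')$: for pairwise distinct $u,x,y,v$, if $x\in R(u,y)$, $y\in R(x,v)$ and $R(u,y)\cap R(x,v)\subseteq\{u,x,y,v\}$ then $x\in R(u,v)$. $(br)$: for any $u,v,x,y,z$, if $R(x,y)=\{x,y\}$, $R(x,u)=\{x,u\}$, $R(v,y)=\{v,y\}$ and $z\in R(u,v)$, then $R(x,z)=\{x,z\}$ or $R(y,z)=\{y,z\}$. *)

theory Defs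
  imports Main
begin

definition simple_graph :: "'a set \<Rightarrow> ('a \<Rightarrow> 'a \<Rightarrow> bool) \<Rightarrow> bool" where
  "simple_graph V E \<longleftrightarrow> finite V \<and> V \<noteq> {} \<and>
     (\<forall>x y. E x y \<longrightarrow> x \<in> V \<and> y \<in> V) \<and>
     (\<forall>x y. E x y \<longrightarrow> E y x) \<and> (\<forall>x. \<not> E x x)"

definition walk :: "'a set \<Rightarrow> ('a \<Rightarrow> 'a \<Rightarrow> bool) \<Rightarrow> 'a \<Rightarrow> 'a \<Rightarrow> 'a list \<Rightarrow> bool" where
  "walk V E u v xs \<longleftrightarrow> xs \<noteq> [] \<and> hd xs = u \<and> last xs = v \<and> set xs \<subseteq> V \<and>
     (\<forall>i. Suc i < length xs \<longrightarrow> E (xs ! i) (xs ! Suc i))"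

definition connected_graph :: "'a set \<Rightarrow> ('a \<Rightarrow> 'a \<Rightarrow> bool) \<Rightarrow> bool" where
  "connected_graph V E \<longleftrightarrow> simple_graph V E \<and> (\<forall>u\<in>V. \<forall>v\<in>V. \<exists>xs. walk V E u v xs)"

definition gdist :: "'a set \<Rightarrow> ('a \<Rightarrow> 'a \<Rightarrow> bool) \<Rightarrow> 'a \<Rightarrow> 'a \<Rightarrow> nat" where
  "gdist V E u v = (LEAST n. \<exists>xs. walk V E u v xs \<and> length xs = Suc n)"

definition interval :: "'a set \<Rightarrow> ('a \<Rightarrow> 'a \<Rightarrow> bool) \<Rightarrow> 'a \<Rightarrow> 'a \<Rightarrow> 'a set" where
  "interval V E u v = {w \<in> V. gdist V E u w + gdist V E w v = gdist V E u v}"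

definition isometric_cycle :: "'a set \<Rightarrow> ('a \<Rightarrow> 'a \<Rightarrow> bool) \<Rightarrow> 'a list \<Rightarrow> bool" where
  "isometric_cycle V E cs \<longleftrightarrow> length cs \<ge> 3 \<and> distinct cs \<and> set cs \<subseteq> V \<and>
     (\<forall>i < length cs. E (cs ! i) (cs ! ((Suc i) mod length cs))) \<and>
     (\<forall>i < length cs. \<forall>j < length cs.
        gdist V E (cs ! i) (cs ! j) =
          min (nat \<bar>int i - int j\<bar>) (length cs - nat \<bar>int i - int j\<bar>))"

definition bridged :: "'a set \<Rightarrow> ('a \<Rightarrow> 'a \<Rightarrow> bool) \<Rightarrow> bool" where
  "bridged V E \<longleftrightarrow> (\<forall>cs. isometric_cycle V E cs \<longrightarrow> length cs \<le> 3)"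

definition axiom_J0' :: "'a set \<Rightarrow> ('a \<Rightarrow> 'a \<Rightarrow> 'a set) \<Rightarrow> bool" where
  "axiom_J0' V R \<longleftrightarrow> (\<forall>u\<in>V. \<forall>x\<in>V. \<forall>y\<in>V. \<forall>v\<in>V.
     distinct [u, x, y, v] \<longrightarrow> x \<in> R u y \<longrightarrow> y \<in> R x v \<longrightarrow>
     R u y \<inter> R x v \<subseteq> {u, x, y, v} \<longrightarrow> x \<in> R u v)"

definition axiom_br :: "'a set \<Rightarrow> ('a \<Rightarrow> 'a \<Rightarrow> 'a set) \<Rightarrow> bool" where
  "axiom_br V R \<longleftrightarrow> (\<forall>u\<in>V. \<forall>v\<in>V. \<forall>x\<in>V. \<forall>y\<in>V. \<forall>z\<in>V.
     R x y = {x, y} \<longrightarrow> R x u = {x, u} \<longrightarrow> R v y = {v, y} \<longrightarrow> z \<in> R u v \<longrightarrow>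
     R x z = {x, z} \<or> R y z = {y, z})"

end

theory Submission
  imports Defs
begin

text \<open>A bump is a geodesic of length 2 or 3 that leaves a ball and returns to its boundary.
  Both directions of the theorem pass through the condition that there are neither bumps nor
  isometric 5-cycles.

  Without bumps and isometric 5-cycles, closed neighbourhoods of vertices and of edges are convex,
  which gives (br); the triangle condition holds, and walking along geodesics with it produces
  the common neighbours that (J0') asks for; and an isometric cycle of length at least 4 would
  contain a bump (even length) or violate the triangle condition (odd length at least 7).

  Conversely, a bump of least size \<open>2 * k + m\<close> closes up with two geodesics to a cycle of that
  length, and minimality makes every such cycle isometric: a pair of vertices at the wrong distance
  would produce, by replacing one vertex, a similar cycle with a bad pair that is closer along the
  cycle. Hence bridged graphs have no bumps. Axiom (br) rules out isometric 5-cycles and the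
  4-cycle \<open>k = 1, m = 2\<close>, and (J0') applied around the bump produces either a smaller bump or a
  non-isometric cycle of the same kind.\<close>

section \<open>The path metric\<close>

locale conn_graph =
  fixes V :: "'a set" and E :: "'a \<Rightarrow> 'a \<Rightarrow> bool"
  assumes connected: "connected_graph V E"
begin

abbreviation d :: "'a \<Rightarrow> 'a \<Rightarrow> nat" where "d \<equiv> gdist V E"

lemma simple: "simple_graph V E"
  using connected unfolding connected_graph_def by blast

lemma adj_in_V1: "E x y \<Longrightarrow> x \<in> V"
  and adj_in_V2: "E x y \<Longrightarrow> y \<in> V"
  and adj_sym: "E x y \<Longrightarrow> E y x"
  and adj_irrefl: "\<not> E x x"
  using simple unfolding simple_graph_def by blast+

lemma adj_neq: "E x y \<Longrightarrow> x \<noteq> y"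
  using adj_irrefl by blast

lemma walk_exists: "u \<in> V \<Longrightarrow> v \<in> V \<Longrightarrow> \<exists>xs. walk V E u v xs"
  using connected unfolding connected_graph_def by blast

lemma shortest_walk_exists:
  assumes "u \<in> V" "v \<in> V"
  shows "\<exists>xs. walk V E u v xs \<and> length xs = Suc (d u v)"
proof -
  obtain xs where w: "walk V E u v xs" using walk_exists assms by blast
  then have "xs \<noteq> []" unfolding walk_def by simp
  then have "\<exists>n xs. walk V E u v xs \<and> length xs = Suc n" using w
    by (metis Suc_pred length_greater_0_conv)
  then show ?thesis unfolding gdist_def by (rule LeastI_ex)
qed

lemma d_le_walk_length: "walk V E u v xs \<Longrightarrow> d u v \<le> length xs - 1"
proof -
  assume w: "walk V E u v xs"
  then have "xs \<noteq> []" unfolding walk_def by simp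
  then have "walk V E u v xs \<and> length xs = Suc (length xs - 1)" using w by simp
  then show ?thesis unfolding gdist_def by (intro Least_le) blast
qed

lemma walk_rev: "walk V E u v xs \<Longrightarrow> walk V E v u (rev xs)"
  unfolding walk_def
proof (intro conjI allI impI)
  assume h: "xs \<noteq> [] \<and> hd xs = u \<and> last xs = v \<and> set xs \<subseteq> V \<and>
    (\<forall>i. Suc i < length xs \<longrightarrow> E (xs ! i) (xs ! Suc i))"
  show "rev xs \<noteq> []" "hd (rev xs) = v" "last (rev xs) = u" "set (rev xs) \<subseteq> V"
    using h by (simp_all add: hd_rev last_rev)
  fix i assume i: "Suc i < length (rev xs)"
  have "E (xs ! (length xs - Suc (Suc i))) (xs ! Suc (length xs - Suc (Suc i)))"
    using h i by simp
  moreover have "Suc (length xs - Suc (Suc i)) = length xs - Suc i" using i by simp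
  ultimately show "E (rev xs ! i) (rev xs ! Suc i)" using i
    by (simp add: rev_nth adj_sym)
qed

lemma walk_append: "walk V E u v xs \<Longrightarrow> walk V E v w ys \<Longrightarrow> walk V E u w (xs @ tl ys)"
proof -
  assume a: "walk V E u v xs" and b: "walk V E v w ys"
  from a have xs: "xs \<noteq> []" "hd xs = u" "last xs = v" "set xs \<subseteq> V"
    "\<And>i. Suc i < length xs \<Longrightarrow> E (xs ! i) (xs ! Suc i)" unfolding walk_def by auto
  from b have ys: "ys \<noteq> []" "hd ys = v" "last ys = w" "set ys \<subseteq> V"
    "\<And>i. Suc i < length ys \<Longrightarrow> E (ys ! i) (ys ! Suc i)" unfolding walk_def by auto
  obtain ys' where ysd: "ys = v # ys'" using ys(1,2) by (cases ys) auto
  show ?thesis unfolding walk_def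
  proof (intro conjI allI impI)
    show "xs @ tl ys \<noteq> []" "hd (xs @ tl ys) = u" using xs by simp_all
    show "last (xs @ tl ys) = w" using xs ys ysd by (cases ys') auto
    show "set (xs @ tl ys) \<subseteq> V" using xs ys ysd by auto
    fix i assume i: "Suc i < length (xs @ tl ys)"
    show "E ((xs @ tl ys) ! i) ((xs @ tl ys) ! Suc i)"
    proof (cases "Suc i < length xs")
      case True then show ?thesis using xs(5)[of i] by (simp add: nth_append)
    next
      case False
      define k where "k = i - (length xs - 1)"
      have ik: "i = length xs - 1 + k" and lx: "length xs \<ge> 1"
        using False xs(1) k_def by (auto simp: Suc_le_eq)
      have "Suc k < length ys" using i ik ysd lx by auto
      then have e: "E (ys ! k) (ys ! Suc k)" using ys(5) by blast
      have "(xs @ tl ys) ! i = ys ! k"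
      proof (cases k)
        case 0
        then have "(xs @ tl ys) ! i = last xs" using ik xs(1) lx
          by (simp add: nth_append last_conv_nth)
        then show ?thesis using xs(3) ysd 0 by simp
      next
        case (Suc k')
        then have "i \<ge> length xs" using ik lx by simp
        then show ?thesis using ik Suc ysd lx by (simp add: nth_append)
      qed
      moreover have "(xs @ tl ys) ! Suc i = ys ! Suc k"
        using ik ysd lx False by (simp add: nth_append)
      ultimately show ?thesis using e by simp
    qed
  qed
qed

lemma d_triangle: assumes "x \<in> V" "y \<in> V" "z \<in> V" shows "d x z \<le> d x y + d y z"
proof -
  obtain xs where a: "walk V E x y xs" "length xs = Suc (d x y)"
    using shortest_walk_exists assms by blast
  obtain ys where b: "walk V E y z ys" "length ys = Suc (d y z)"
    using shortest_walk_exists assms by blast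
  have "d x z \<le> length (xs @ tl ys) - 1" using walk_append[OF a(1) b(1)] by (rule d_le_walk_length)
  then show ?thesis using a b by simp
qed

lemma d_sym: assumes "x \<in> V" "y \<in> V" shows "d x y = d y x"
proof -
  have "d x y \<le> d y x" if xy: "x \<in> V" "y \<in> V" for x y
  proof -
    obtain xs where "walk V E y x xs" "length xs = Suc (d y x)"
      using shortest_walk_exists xy by blast
    then show ?thesis using d_le_walk_length[OF walk_rev] by fastforce
  qed
  then show ?thesis using assms by (meson antisym)
qed

lemma d_self: "x \<in> V \<Longrightarrow> d x x = 0"
  using d_le_walk_length[of x x "[x]"] unfolding walk_def by simp

lemma d_eq_0D: assumes "x \<in> V" "y \<in> V" "d x y = 0" shows "x = y"
proof -
  obtain xs where a: "walk V E x y xs" "length xs = Suc 0"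
    using shortest_walk_exists assms by fastforce
  then obtain z where "xs = [z]" by (cases xs) auto
  then show ?thesis using a unfolding walk_def by auto
qed

lemma d_adj: assumes "E x y" shows "d x y = 1"
proof -
  have "walk V E x y [x, y]" unfolding walk_def using assms adj_in_V1 adj_in_V2
    by (auto simp: less_Suc_eq)
  then have "d x y \<le> 1" using d_le_walk_length by fastforce
  moreover have "d x y \<noteq> 0" using d_eq_0D adj_in_V1 adj_in_V2 adj_neq assms by blast
  ultimately show ?thesis by simp
qed

lemma d_adj_both: "E x y \<Longrightarrow> d x y = 1 \<and> d y x = 1"
  using d_adj adj_sym by blast

lemma adj_if_d_eq_1: assumes "x \<in> V" "y \<in> V" "d x y = 1" shows "E x y"
proof -
  obtain xs where a: "walk V E x y xs" "length xs = 2"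
    using shortest_walk_exists assms by fastforce
  then obtain p q where "xs = [p, q]" by (cases xs; cases "tl xs") auto
  then show ?thesis using a unfolding walk_def by auto
qed

lemma d_le_1_cases: "x \<in> V \<Longrightarrow> y \<in> V \<Longrightarrow> d x y \<le> 1 \<Longrightarrow> x = y \<or> E x y"
  using d_eq_0D adj_if_d_eq_1 by (metis One_nat_def le_SucE le_zero_eq)

lemma d_Suc_step:
  assumes "x \<in> V" "y \<in> V" "d x y = Suc k"
  obtains w where "E x w" "d w y = k"
proof -
  obtain xs where a: "walk V E x y xs" "length xs = Suc (Suc k)"
    using shortest_walk_exists assms by fastforce
  obtain xs' where xd: "xs = x # xs'" using a unfolding walk_def by (cases xs) auto
  have ex: "E x (hd xs')" using a xd unfolding walk_def
    by (metis Suc_less_eq hd_conv_nth length_Cons length_greater_0_conv nth_Cons_0 nth_Cons_Suc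
        zero_less_Suc)
  have "walk V E (hd xs') y xs'" using a xd unfolding walk_def
    by (auto simp: last_ConsR)
  then have "d (hd xs') y \<le> k" using d_le_walk_length a xd by fastforce
  moreover have "d x y \<le> d x (hd xs') + d (hd xs') y" using d_triangle assms adj_in_V2[OF ex] by blast
  ultimately show ?thesis using that ex d_adj[OF ex] assms by auto
qed

lemma d_triangle_sym:
  assumes "x \<in> V" "y \<in> V" "z \<in> V"
  shows "d x z \<le> d x y + d y z" "d x z \<le> d y x + d y z"
    "d x z \<le> d x y + d z y" "d x z \<le> d y x + d z y"
  using d_triangle[OF assms] d_sym assms by metis+

lemma d_eq_2_if_induced_path:
  assumes "E x y" "E y z" "x \<noteq> z" "\<not> E x z" shows "d x z = 2"
proof -
  have V: "x \<in> V" "y \<in> V" "z \<in> V" using assms adj_in_V1 adj_in_V2 by auto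
  have "d x z \<le> 2" using d_triangle[OF V] d_adj assms by fastforce
  moreover have "d x z \<noteq> 0" using d_eq_0D V assms by blast
  moreover have "d x z \<noteq> 1" using adj_if_d_eq_1 V assms by blast
  ultimately show ?thesis by linarith
qed

lemma d_eq_2_common_neighbour:
  assumes "x \<in> V" "y \<in> V" "d x y = 2"
  obtains t where "E x t" "E t y"
proof -
  obtain t where t: "E x t" "d t y = 1" using d_Suc_step[of x y 1] assms by auto
  then show ?thesis using that adj_if_d_eq_1 adj_in_V2 assms by blast
qed

lemma d_ge_2_if_levels_differ_by_2:
  assumes "q \<in> V" "a \<in> V" "b \<in> V" "d q a + 2 \<le> d q b"
  shows "2 \<le> d a b" "\<not> E a b" "\<not> E b a" "a \<noteq> b"
proof -
  have "d q b \<le> d q a + d a b" using d_triangle assms by blast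
  then show "2 \<le> d a b" using assms by linarith
  then show "\<not> E a b" "\<not> E b a" "a \<noteq> b" using d_adj_both[of a b] d_adj_both[of b a] d_self[of a] assms
    by auto
qed

lemma geodesic_exists:
  assumes "x \<in> V" "y \<in> V"
  obtains f where "f 0 = x" "f (d x y) = y" "\<And>i. i < d x y \<Longrightarrow> E (f i) (f (Suc i))"
    "\<And>i. i \<le> d x y \<Longrightarrow> f i \<in> V \<and> d x (f i) = i"
proof -
  have "\<exists>f. f 0 = x \<and> f (d x y) = y \<and> (\<forall>i<d x y. E (f i) (f (Suc i))) \<and>
    (\<forall>i\<le>d x y. f i \<in> V \<and> d x (f i) = i)"
    using assms
  proof (induction "d x y" arbitrary: y)
    case 0
    then have "y = x" using d_eq_0D by metis
    then show ?case using 0 d_self by (intro exI[of _ "\<lambda>i. x"]) auto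
  next
    case (Suc k)
    have "d y x = Suc k" using Suc d_sym by metis
    then obtain w where w: "E y w" "d w x = k" using d_Suc_step Suc by blast
    have wV: "w \<in> V" using w adj_in_V2 by blast
    have dxw: "d x w = k" using w d_sym wV Suc by metis
    obtain f where f: "f 0 = x" "f k = w" "\<forall>i<k. E (f i) (f (Suc i))"
      "\<forall>i\<le>k. f i \<in> V \<and> d x (f i) = i"
      using Suc.hyps(1)[OF dxw[symmetric] Suc.prems(1) wV] dxw by auto
    define g where "g = f(Suc k := y)"
    have "\<forall>i<d x y. E (g i) (g (Suc i))"
    proof (intro allI impI)
      fix i assume "i < d x y"
      then show "E (g i) (g (Suc i))" using f w adj_sym Suc(2) unfolding g_def by (cases "i = k") auto
    qed
    moreover have "\<forall>i\<le>d x y. g i \<in> V \<and> d x (g i) = i"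
      using f Suc unfolding g_def by (auto simp: le_Suc_eq)
    moreover have "g 0 = x" "g (d x y) = y" using f Suc(2) unfolding g_def by auto
    ultimately show ?case by blast
  qed
  then show ?thesis using that by blast
qed

lemma mem_interval: "w \<in> interval V E u v \<longleftrightarrow> w \<in> V \<and> d u w + d w v = d u v"
  unfolding interval_def by simp

lemma interval_eq_ends_iff:
  assumes "a \<in> V" "b \<in> V"
  shows "interval V E a b = {a, b} \<longleftrightarrow> d a b \<le> 1"
proof
  assume h: "interval V E a b = {a, b}"
  show "d a b \<le> 1"
  proof (rule ccontr)
    assume "\<not> d a b \<le> 1"
    then obtain k where k: "d a b = Suc k" "k \<ge> 1" by (cases "d a b") auto
    then obtain w where w: "E a w" "d w b = k" using d_Suc_step assms by blast
    then have "w \<in> interval V E a b" using mem_interval adj_in_V2 k d_adj by auto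
    moreover have "w \<noteq> a" "w \<noteq> b" using w k adj_neq d_self assms by auto
    ultimately show False using h by blast
  qed
next
  assume h: "d a b \<le> 1"
  have "interval V E a b \<subseteq> {a, b}"
  proof
    fix w assume "w \<in> interval V E a b"
    then have w: "w \<in> V" "d a w + d w b = d a b" using mem_interval by auto
    then have "d a w = 0 \<or> d w b = 0" using h by linarith
    then show "w \<in> {a, b}" using d_eq_0D w assms by blast
  qed
  moreover have "{a, b} \<subseteq> interval V E a b"
    using assms d_self mem_interval d_sym by auto
  ultimately show "interval V E a b = {a, b}" by blast
qed

section \<open>Bumps and the triangle condition\<close>

text \<open>A bump witnesses that the ball of radius \<open>k\<close> around \<open>q\<close> is not locally convex. Its size
  \<open>2 * k + m\<close> is the length of the cycle it closes up to with two geodesics back to \<open>q\<close>.\<close>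

definition bump :: "'a \<Rightarrow> nat \<Rightarrow> nat \<Rightarrow> (nat \<Rightarrow> 'a) \<Rightarrow> bool" where
  "bump q k m T \<longleftrightarrow> q \<in> V \<and> (m = 2 \<or> m = 3) \<and> (\<forall>i\<le>m. T i \<in> V) \<and> (\<forall>i<m. E (T i) (T (Suc i)))
     \<and> d q (T 0) = k \<and> d q (T m) = k \<and> (\<forall>i. 0 < i \<and> i < m \<longrightarrow> d q (T i) = Suc k)
     \<and> d (T 0) (T m) = m"

definition bump_free :: bool where
  "bump_free \<longleftrightarrow> (\<forall>q k m T. \<not> bump q k m T)"

definition no_bump_below :: "nat \<Rightarrow> bool" where
  "no_bump_below N \<longleftrightarrow> (\<forall>q k m T. bump q k m T \<longrightarrow> N \<le> 2*k+m)"

definition C5_free :: bool where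
  "C5_free \<longleftrightarrow> (\<forall>cs. isometric_cycle V E cs \<longrightarrow> length cs \<noteq> 5)"

definition triangle_condition :: "nat \<Rightarrow> bool" where
  "triangle_condition h \<longleftrightarrow> (\<forall>q x y. q \<in> V \<longrightarrow> E x y \<longrightarrow> d q x = h \<longrightarrow> d q y = h \<longrightarrow>
     (\<exists>w. E w x \<and> E w y \<and> Suc (d q w) = h))"

lemma bump_2:
  assumes "q \<in> V" "d q u = k" "d q v = k" "d q z = Suc k" "E u z" "E z v" "d u v = 2"
  shows "bump q k 2 (\<lambda>i. [u, z, v] ! i)"
  using assms adj_in_V1 adj_in_V2 unfolding bump_def
  by (auto simp: less_Suc_eq le_Suc_eq numeral_2_eq_2)

lemma bump_3:
  assumes "q \<in> V" "d q u = k" "d q v = k" "d q z1 = Suc k" "d q z2 = Suc k"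
    "E u z1" "E z1 z2" "E z2 v" "d u v = 3"
  shows "bump q k 3 (\<lambda>i. [u, z1, z2, v] ! i)"
  using assms adj_in_V1 adj_in_V2 unfolding bump_def
  by (auto simp: less_Suc_eq le_Suc_eq numeral_3_eq_3)

lemma no_bump_below_2:
  assumes "no_bump_below N" "q \<in> V" "d q u = k" "d q v = k" "d q z = Suc k"
    "E u z" "E z v" "d u v = 2"
  shows "N \<le> 2*k+2"
  using bump_2[OF assms(2-)] assms(1) unfolding no_bump_below_def by blast

lemma no_bump_below_3:
  assumes "no_bump_below N" "q \<in> V" "d q u = k" "d q v = k" "d q z1 = Suc k" "d q z2 = Suc k"
    "E u z1" "E z1 z2" "E z2 v" "d u v = 3"
  shows "N \<le> 2*k+3"
  using bump_3[OF assms(2-)] assms(1) unfolding no_bump_below_def by blast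

lemma bump_free_no_bump_below: "bump_free \<Longrightarrow> no_bump_below N"
  unfolding bump_free_def no_bump_below_def by blast

lemma bump_free_2:
  assumes "bump_free" "q \<in> V" "d q u = k" "d q v = k" "d q z = Suc k" "E u z" "E z v" "d u v = 2"
  shows False
  using bump_2[OF assms(2-)] assms(1) unfolding bump_free_def by blast

lemma adj_or_eq_if_common_upper_neighbour:
  assumes nb: "no_bump_below N" and kN: "2*k+2 < N" and "q \<in> V" "d q u = k" "d q v = k"
    "d q z = Suc k" "E u z" "E z v"
  shows "u = v \<or> E u v"
proof -
  have V: "u \<in> V" "z \<in> V" "v \<in> V" using assms adj_in_V1 adj_in_V2 by auto
  have "d u v \<le> 2" using d_triangle[OF V] d_adj assms by fastforce
  moreover have "d u v \<noteq> 2" using no_bump_below_2[OF nb] assms kN by fastforce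
  ultimately show ?thesis using d_le_1_cases V by simp
qed

lemma bump_free_adj_or_eq:
  assumes "bump_free" "q \<in> V" "d q u = k" "d q v = k" "d q z = Suc k" "E u z" "E z v"
  shows "u = v \<or> E u v"
  using adj_or_eq_if_common_upper_neighbour[OF bump_free_no_bump_below[OF assms(1)], of k] assms(2-)
  by fastforce

lemma no_induced_C4:
  assumes "no_bump_below N" "4 < N" "E a b" "E b c" "E c e" "E e a" "d a c = 2" "d b e = 2"
  shows False
  using no_bump_below_2[OF assms(1), of a b 1 e c] assms adj_in_V1 d_adj_both by fastforce

lemma induced_C5_isometric:
  assumes "E a b" "E b c" "E c x" "E x e" "E e a"
    "\<not> E a c" "\<not> E a x" "\<not> E b x" "\<not> E b e" "\<not> E c e"
    "a \<noteq> c" "a \<noteq> x" "b \<noteq> x" "b \<noteq> e" "c \<noteq> e"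
  shows "isometric_cycle V E [a, b, c, x, e]"
proof -
  have V: "a \<in> V" "b \<in> V" "c \<in> V" "x \<in> V" "e \<in> V" using assms adj_in_V1 by auto
  have D0: "d a a = 0" "d b b = 0" "d c c = 0" "d x x = 0" "d e e = 0" using d_self V by auto
  have D1: "d a b = 1" "d b c = 1" "d c x = 1" "d x e = 1" "d e a = 1"
    "d b a = 1" "d c b = 1" "d x c = 1" "d e x = 1" "d a e = 1" using assms d_adj_both by auto
  have D2: "d a c = 2" "d a x = 2" "d b x = 2" "d b e = 2" "d c e = 2"
    using d_eq_2_if_induced_path assms adj_sym by metis+
  have D2': "d c a = 2" "d x a = 2" "d x b = 2" "d e b = 2" "d e c = 2"
    using D2 d_sym V by metis+
  show ?thesis unfolding isometric_cycle_def
  proof (intro conjI allI impI)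
    show "distinct [a, b, c, x, e]" using assms adj_neq by auto
    show "set [a, b, c, x, e] \<subseteq> V" using V by auto
    fix i assume "i < length [a, b, c, x, e]"
    then have "i = 0 \<or> i = 1 \<or> i = 2 \<or> i = 3 \<or> i = 4" by auto
    then show "E ([a, b, c, x, e] ! i) ([a, b, c, x, e] ! (Suc i mod length [a, b, c, x, e]))"
      using assms by auto
  next
    fix i k assume "i < length [a, b, c, x, e]" "k < length [a, b, c, x, e]"
    then have "i = 0 \<or> i = 1 \<or> i = 2 \<or> i = 3 \<or> i = 4" "k = 0 \<or> k = 1 \<or> k = 2 \<or> k = 3 \<or> k = 4"
      by auto
    then show "d ([a, b, c, x, e] ! i) ([a, b, c, x, e] ! k) =
        min (nat \<bar>int i - int k\<bar>) (length [a, b, c, x, e] - nat \<bar>int i - int k\<bar>)"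
      using D0 D1 D2 D2' by (elim disjE) auto
  qed simp
qed

lemma C5_freeD:
  assumes "C5_free" "E a b" "E b c" "E c x" "E x e" "E e a"
    "\<not> E a c" "\<not> E a x" "\<not> E b x" "\<not> E b e" "\<not> E c e"
    "a \<noteq> c" "a \<noteq> x" "b \<noteq> x" "b \<noteq> e" "c \<noteq> e"
  shows False
  using induced_C5_isometric[OF assms(2-)] assms(1) unfolding C5_free_def by fastforce

lemma pentagon_apex_adjacent:
  assumes nc5: "C5_free" and nb: "no_bump_below N" and N: "4 < N"
    and e: "E x' x" "E x y" "E y y'" "E x' t" "E t y'"
    and d2: "d x' y = 2" "d x y' = 2" "d x' y' = 2"
  shows "E t x \<and> E t y"
proof -
  have V: "x' \<in> V" "x \<in> V" "y \<in> V" "y' \<in> V" "t \<in> V" using e adj_in_V1 adj_in_V2 by auto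
  have ne: "\<not> E x' y" "\<not> E x y'" "\<not> E x' y'" "x' \<noteq> y" "x \<noteq> y'" "x' \<noteq> y'" "t \<noteq> x" "t \<noteq> y"
    using d2 d_adj d_self V e by auto
  consider "E t x" "E t y" | "E t x" "\<not> E t y" | "\<not> E t x" "E t y" | "\<not> E t x" "\<not> E t y"
    by blast
  then show ?thesis
  proof cases
    case 1
    then show ?thesis ..
  next
    case 2
    have "d t y = 2" using d_eq_2_if_induced_path[of t x y] 2 e ne by blast
    then show ?thesis using no_induced_C4[OF nb N 2(1) e(2,3) adj_sym[OF e(5)]] d2(2) by blast
  next
    case 3
    have "d x t = 2" using d_eq_2_if_induced_path[of x y t] 3 e ne adj_sym by metis
    then show ?thesis
      using no_induced_C4[OF nb N e(1,2) adj_sym[OF 3(2)] adj_sym[OF e(4)]] d2(1) by blast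
  next
    case 4
    have False
      by (rule C5_freeD[OF nc5, of x' x y y' t]) (use 4 e ne adj_sym in auto)
    then show ?thesis ..
  qed
qed

lemma lower_neighbours_of_edge:
  assumes qV: "q \<in> V" and exy: "E x y" and dx: "d q x = Suc h" and dy: "d q y = Suc h"
    and nw: "\<not> (\<exists>w. E w x \<and> E w y \<and> d q w = h)"
  obtains x' y' where "E x x'" "E y y'" "d q x' = h" "d q y' = h" "d x' y = 2" "d x y' = 2" "x' \<noteq> y'"
proof -
  have xV: "x \<in> V" and yV: "y \<in> V" using exy adj_in_V1 adj_in_V2 by auto
  have "d x q = Suc h" "d y q = Suc h" using dx dy d_sym qV xV yV by metis+
  then obtain x' y' where x': "E x x'" "d x' q = h" and y': "E y y'" "d y' q = h"
    using d_Suc_step xV yV qV by metis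
  have qx': "d q x' = h" and qy': "d q y' = h" using x' y' d_sym qV adj_in_V2 by metis+
  have "\<not> E x' y" "\<not> E x y'" "x' \<noteq> y'" using nw x' y' qx' qy' adj_sym by blast+
  moreover have "x' \<noteq> y" "x \<noteq> y'" using qx' qy' dx dy by auto
  ultimately have "d x' y = 2" "d x y' = 2" "x' \<noteq> y'"
    using d_eq_2_if_induced_path x' y' exy adj_sym by blast+
  then show ?thesis using that x' y' qx' qy' by blast
qed

lemma triangle_condition_if_no_small_bump:
  assumes nc5: "C5_free" and nb: "no_bump_below N" and hN: "2*h+1 < N"
  shows "triangle_condition h"
  unfolding triangle_condition_def
proof (intro allI impI)
  fix q x y assume qV: "q \<in> V" and exy: "E x y" and dx: "d q x = h" and dy: "d q y = h"
  have xV: "x \<in> V" and yV: "y \<in> V" using exy adj_in_V1 adj_in_V2 by auto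
  show "\<exists>w. E w x \<and> E w y \<and> Suc (d q w) = h"
  proof (rule ccontr)
    assume nw: "\<not> (\<exists>w. E w x \<and> E w y \<and> Suc (d q w) = h)"
    have "h \<noteq> 0" using dx dy d_eq_0D qV xV yV adj_neq exy by metis
    then obtain h' where hh: "h = Suc h'" by (cases h) auto
    have h'0: "h' \<noteq> 0"
    proof
      assume "h' = 0"
      then have "E q x" "E q y" using adj_if_d_eq_1 dx dy hh qV xV yV by auto
      then show False using nw d_self qV hh \<open>h' = 0\<close> adj_sym by auto
    qed
    have "d q x = Suc h'" "d q y = Suc h'" "\<not> (\<exists>w. E w x \<and> E w y \<and> d q w = h')"
      using dx dy hh nw by auto
    then obtain x' y' where x': "E x x'" "d q x' = h'" and y': "E y y'" "d q y' = h'"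
      and dx'y: "d x' y = 2" and dxy': "d x y' = 2" and x'y': "x' \<noteq> y'"
      by (rule lower_neighbours_of_edge[OF qV exy])
    have x'V: "x' \<in> V" and y'V: "y' \<in> V" using x' y' adj_in_V2 by auto
    have "d x' y' \<le> 3" using d_triangle_sym[OF x'V yV y'V] dx'y d_adj_both y' by fastforce
    moreover have "d x' y' \<noteq> 0" using d_eq_0D x'V y'V x'y' by blast
    ultimately consider "d x' y' = 1" | "d x' y' = 2" | "d x' y' = 3" by linarith
    then show False
    proof cases
      case 1
      then have "E y' x'" using adj_if_d_eq_1 x'V y'V adj_sym by blast
      moreover have "4 < N" using hN hh h'0 by linarith
      ultimately show False
        using no_induced_C4[OF nb _ adj_sym[OF x'(1)] exy y'(1)] dx'y dxy' by blast
    next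
      case 2
      then obtain t where t: "E x' t" "E t y'" using d_eq_2_common_neighbour x'V y'V by blast
      have "E t x \<and> E t y"
        by (rule pentagon_apex_adjacent[OF nc5 nb, of x' x y y' t])
          (use hN hh h'0 x' y' exy t dx'y dxy' 2 adj_sym in auto)
      then have "h' \<le> d q t" "d q t \<le> Suc h'" "d q t \<noteq> h'"
        using d_triangle_sym[OF qV adj_in_V2[OF t(1)] xV] d_triangle_sym[OF qV x'V adj_in_V2[OF t(1)]]
          dx x'(2) hh t d_adj_both nw by fastforce+
      then have "d q t = Suc h'" by linarith
      then have "N \<le> 2*h'+2" using no_bump_below_2[OF nb qV x'(2) y'(2), of t] t 2 by blast
      then show False using hN hh by linarith
    next
      case 3
      then have "N \<le> 2*h'+3"
        using no_bump_below_3[OF nb qV x'(2) y'(2), of x y] dx dy hh x' y' exy adj_sym by auto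
      then show False using hN hh by linarith
    qed
  qed
qed

lemma bump_free_triangle_condition: "bump_free \<Longrightarrow> C5_free \<Longrightarrow> triangle_condition h"
  using triangle_condition_if_no_small_bump[of "2*h+2" h] bump_free_no_bump_below by auto

section \<open>Bump-free graphs without isometric pentagons are bridged\<close>

lemma isometric_cycleD:
  assumes "isometric_cycle V E cs"
  shows "\<And>i. i < length cs \<Longrightarrow> E (cs ! i) (cs ! (Suc i mod length cs))"
    "\<And>i k. i \<le> k \<Longrightarrow> k < length cs \<Longrightarrow> d (cs ! i) (cs ! k) = min (k - i) (length cs - (k - i))"
    "\<And>i. i < length cs \<Longrightarrow> cs ! i \<in> V"
proof -
  show "\<And>i. i < length cs \<Longrightarrow> E (cs ! i) (cs ! (Suc i mod length cs))"
    "\<And>i. i < length cs \<Longrightarrow> cs ! i \<in> V"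
    using assms unfolding isometric_cycle_def by auto
  fix i k assume "i \<le> k" "k < length cs"
  moreover have "nat \<bar>int i - int k\<bar> = k - i" using \<open>i \<le> k\<close> by simp
  ultimately show "d (cs ! i) (cs ! k) = min (k - i) (length cs - (k - i))"
    using assms unfolding isometric_cycle_def by (metis le_less_trans)
qed

lemma bump_at_antipode_of_even_isometric_cycle:
  assumes cs: "isometric_cycle V E cs" and M: "length cs = 2*M" "2 \<le> M"
  shows "bump (cs ! 0) (M-1) 2 (\<lambda>i. [cs ! (M-1), cs ! M, cs ! (M+1)] ! i)"
proof (rule bump_2)
  note adj = isometric_cycleD(1)[OF cs] and dist = isometric_cycleD(2)[OF cs]
  show "cs ! 0 \<in> V" using isometric_cycleD(3)[OF cs] M by simp
  show "d (cs ! 0) (cs ! (M-1)) = M - 1" "d (cs ! 0) (cs ! (M+1)) = M - 1"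
    "d (cs ! 0) (cs ! M) = Suc (M-1)" "d (cs ! (M-1)) (cs ! (M+1)) = 2"
    using dist[of 0 "M-1"] dist[of 0 "M+1"] dist[of 0 M] dist[of "M-1" "M+1"] M by simp_all
  show "E (cs ! (M-1)) (cs ! M)" "E (cs ! M) (cs ! (M+1))"
    using adj[of "M-1"] adj[of M] M by simp_all
qed

text \<open>The triangle condition for the edge opposite to \<open>c 0\<close> yields a common neighbour one level
  down, which is then forced to be adjacent to \<open>c (M - 1)\<close> and \<open>c (M + 2)\<close>; this shortcuts
  their distance 3.\<close>
lemma odd_isometric_cycle_short:
  assumes bf: "bump_free" and tc: "triangle_condition M"
    and cs: "isometric_cycle V E cs" and M: "length cs = 2*M+1"
  shows "M \<le> 2"
proof (rule ccontr)
  assume "\<not> M \<le> 2"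
  define c where "c = (\<lambda>i. cs ! i)"
  have adj: "E (c i) (c (Suc i))" if "Suc i < 2*M+1" for i
    using isometric_cycleD(1)[OF cs, of i] that M unfolding c_def by simp
  have dist: "d (c i) (c k) = min (k - i) (2*M+1 - (k - i))" if "i \<le> k" "k < 2*M+1" for i k
    using isometric_cycleD(2)[OF cs, of i k] that M unfolding c_def by simp
  have cV: "c i \<in> V" if "i < 2*M+1" for i
    using isometric_cycleD(3)[OF cs, of i] that M unfolding c_def by simp
  have M3: "M \<ge> 3" using \<open>\<not> M \<le> 2\<close> by simp
  have c0V: "c 0 \<in> V" using cV by simp
  have lev: "d (c 0) (c (M-1)) = M - 1" "d (c 0) (c M) = Suc (M-1)"
    "d (c 0) (c (M+1)) = Suc (M-1)" "d (c 0) (c (M+2)) = M - 1"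
    using dist[of 0 "M-1"] dist[of 0 M] dist[of 0 "M+1"] dist[of 0 "M+2"] M3 by simp_all
  have e: "E (c (M-1)) (c M)" "E (c M) (c (M+1))" "E (c (M+1)) (c (M+2))"
    using adj[of "M-1"] adj[of M] adj[of "M+1"] M3 by simp_all
  have far: "d (c (M-1)) (c (M+1)) = 2" "d (c M) (c (M+2)) = 2" "d (c (M-1)) (c (M+2)) = 3"
    using dist[of "M-1" "M+1"] dist[of M "M+2"] dist[of "M-1" "M+2"] M3 by simp_all
  obtain w where w: "E w (c M)" "E w (c (M+1))" "d (c 0) w = M - 1"
    using tc[unfolded triangle_condition_def, rule_format, OF c0V e(2)] lev M3 by force
  have "w = c (M-1) \<or> E w (c (M-1))"
    using bump_free_adj_or_eq[OF bf c0V w(3) lev(1,2) w(1)] e(1) adj_sym by blast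
  moreover have "w \<noteq> c (M-1)" using w(2) far(1) d_adj by force
  moreover have "w = c (M+2) \<or> E w (c (M+2))"
    using bump_free_adj_or_eq[OF bf c0V w(3) lev(4,3) w(2) e(3)] .
  moreover have "w \<noteq> c (M+2)" using w(1) far(2) d_adj adj_sym by force
  ultimately have "d (c (M-1)) (c (M+2)) \<le> 2"
    using d_triangle[OF cV[of "M-1"] adj_in_V1[OF w(1)] cV[of "M+2"]] d_adj_both M3 by fastforce
  then show False using far(3) by simp
qed

theorem bridged_if_bump_free:
  assumes bf: "bump_free" and nc5: "C5_free"
  shows "bridged V E"
  unfolding bridged_def
proof (intro allI impI)
  fix cs assume cs: "isometric_cycle V E cs"
  show "length cs \<le> 3"
  proof (rule ccontr)
    assume "\<not> length cs \<le> 3"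
    show False
    proof (cases "even (length cs)")
      case True
      then obtain M where "length cs = 2*M" "2 \<le> M" using \<open>\<not> length cs \<le> 3\<close> by auto
      then show False
        using bump_at_antipode_of_even_isometric_cycle[OF cs] bf unfolding bump_free_def by blast
    next
      case False
      then obtain M where M: "length cs = 2*M+1" using oddE by blast
      then have "M \<le> 2"
        using odd_isometric_cycle_short[OF bf bump_free_triangle_condition[OF bf nc5] cs] by blast
      then show False using nc5 cs M \<open>\<not> length cs \<le> 3\<close> unfolding C5_free_def by auto
    qed
  qed
qed

section \<open>Bump-free graphs without isometric pentagons satisfy (br)\<close>

lemma closed_neighbourhood_convex:
  assumes bf: "bump_free" and V: "x \<in> V" "u \<in> V" "v \<in> V"
    and xu: "d x u \<le> 1" and xv: "d x v \<le> 1" and z: "z \<in> interval V E u v"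
  shows "d x z \<le> 1"
proof (rule ccontr)
  assume xz: "\<not> d x z \<le> 1"
  have zV: "z \<in> V" and uzv: "d u z + d z v = d u v" using z mem_interval by auto
  have "d x z \<le> d x u + d u z" "d x z \<le> d x v + d v z" "d u v \<le> d u x + d x v"
    using d_triangle V zV by blast+
  moreover have "d v z = d z v" "d u x = d x u" using d_sym V zV by blast+
  ultimately have "d u v = 2" "d u z = 1" "d z v = 1" "d x u = 1" "d x v = 1" "d x z = 2"
    using xu xv xz uzv by linarith+
  then show False
    using bump_free_2[OF bf V(1), of u 1 v z] adj_if_d_eq_1 V zV by simp
qed

lemma edge_neighbourhood_convex_3:
  assumes bf: "bump_free" and exy: "E x y" and exu: "E x u" and eyv: "E y v"
    and uv: "d u v = 3" and z: "z \<in> interval V E u v"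
  shows "d x z \<le> 1 \<or> d y z \<le> 1"
proof (rule ccontr)
  assume far: "\<not> (d x z \<le> 1 \<or> d y z \<le> 1)"
  have V: "x \<in> V" "y \<in> V" "u \<in> V" "v \<in> V" using assms adj_in_V1 adj_in_V2 by auto
  have zV: "z \<in> V" and uzv: "d u z + d z v = 3" using z uv mem_interval by auto
  have D1: "d x u = 1" "d u x = 1" "d y v = 1" "d v y = 1" "d x y = 1"
    using d_adj_both exy exu eyv by auto
  have "d u v \<le> d u y + d y v" "d u y \<le> d u x + d x y" "d u v \<le> d u x + d x v"
    "d x v \<le> d x y + d y v" "d x z \<le> d x u + d u z" "d y z \<le> d y v + d v z"
    using d_triangle V zV by blast+
  moreover have "d v z = d z v" "d v x = d x v" "d u y = d y u" using d_sym V zV by blast+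
  ultimately have D2: "d u y = 2" "d v x = 2" and uz_zv: "d u z = 1 \<or> d z v = 1"
    using uv uzv D1 far by linarith+
  from uz_zv show False
  proof
    assume uz: "d u z = 1"
    have "d v z = 2" "d v u = Suc 2" "d x z = 2"
      using uz uzv uv d_sym V zV \<open>d x z \<le> d x u + d u z\<close> D1 far by auto
    then show False
      using bump_free_2[OF bf V(4) D2(2), of z u] exu adj_if_d_eq_1[OF V(3) zV uz] by blast
  next
    assume zv: "d z v = 1"
    have "d u z = 2" "d u v = Suc 2" "d y z = 2"
      using zv uzv uv \<open>d y z \<le> d y v + d v z\<close> \<open>d v z = d z v\<close> D1 far by auto
    then show False
      using bump_free_2[OF bf V(3) D2(1), of z v] eyv adj_sym adj_if_d_eq_1[OF zV V(4) zv] by blast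
  qed
qed

lemma edge_neighbourhood_convex:
  assumes bf: "bump_free" and nc5: "C5_free" and exy: "E x y" and V: "u \<in> V" "v \<in> V"
    and xu: "d x u \<le> 1" and yv: "d y v \<le> 1" and z: "z \<in> interval V E u v"
  shows "d x z \<le> 1 \<or> d y z \<le> 1"
proof (rule ccontr)
  assume far: "\<not> (d x z \<le> 1 \<or> d y z \<le> 1)"
  have xV: "x \<in> V" and yV: "y \<in> V" using exy adj_in_V1 adj_in_V2 by auto
  have zV: "z \<in> V" and uzv: "d u z + d z v = d u v" using z mem_interval by auto
  have T: "d x z \<le> d x u + d u z" "d y z \<le> d y v + d v z" "d u v \<le> d u x + d x v"
    "d u y \<le> d u x + d x y" "d x v \<le> d x y + d y v"
    using d_triangle xV yV V zV by blast+
  have S: "d v z = d z v" "d u x = d x u" "d y u = d u y" using d_sym xV yV V zV by blast+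
  have dxy: "d x y = 1" "d y x = 1" using d_adj_both exy by auto
  have "u \<noteq> x"
  proof
    assume "u = x"
    then have "z = v" using uzv T(5) dxy yv far d_eq_0D zV V by fastforce
    then show False using far yv by simp
  qed
  moreover have "v \<noteq> y"
  proof
    assume "v = y"
    then have "d u z = 0" using uzv T(4) dxy xu far S by fastforce
    then show False using d_eq_0D zV V far xu by fastforce
  qed
  ultimately have exu: "E x u" and eyv: "E y v" using d_le_1_cases xV yV V xu yv by blast+
  then have D1: "d x u = 1" "d y v = 1" "d x y = 1" using d_adj exy by auto
  have "d u v = 2 \<or> d u v = 3" using T S far uzv D1 by linarith
  then show False
  proof
    assume uv: "d u v = 2"
    have "d y u \<ge> 2"
      using closed_neighbourhood_convex[OF bf yV V _ yv z] far by linarith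
    moreover have "d x v \<ge> 2"
      using closed_neighbourhood_convex[OF bf xV V xu _ z] far by linarith
    ultimately have "d u y = 2" "d x v = 2" "d u z = 1" "d z v = 1"
      using T S D1 uv uzv far by linarith+
    then have "E z x"
      using pentagon_apex_adjacent[OF nc5 bump_free_no_bump_below[OF bf, of 5], of u x y v z]
        exu exy eyv uv adj_if_d_eq_1 V zV adj_sym by simp
    then show False using far d_adj_both by fastforce
  next
    assume "d u v = 3"
    then show False using edge_neighbourhood_convex_3[OF bf exy exu eyv _ z] far by blast
  qed
qed

theorem axiom_br_if_bump_free:
  assumes bf: "bump_free" and nc5: "C5_free"
  shows "axiom_br V (interval V E)"
  unfolding axiom_br_def
proof (intro ballI impI)
  fix u v x y z assume V: "u \<in> V" "v \<in> V" "x \<in> V" "y \<in> V" "z \<in> V"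
  assume "interval V E x y = {x, y}" "interval V E x u = {x, u}" "interval V E v y = {v, y}"
    and z: "z \<in> interval V E u v"
  then have xy: "d x y \<le> 1" and xu: "d x u \<le> 1" and vy: "d y v \<le> 1"
    using interval_eq_ends_iff d_sym V by auto
  have "d x z \<le> 1 \<or> d y z \<le> 1"
  proof (cases "x = y")
    case True
    then show ?thesis using closed_neighbourhood_convex[OF bf V(3,1,2) xu _ z] vy by simp
  next
    case False
    then have "E x y" using d_le_1_cases V xy by blast
    then show ?thesis using edge_neighbourhood_convex[OF bf nc5 _ V(1,2) xu vy z] by blast
  qed
  then show "interval V E x z = {x, z} \<or> interval V E y z = {y, z}"
    using interval_eq_ends_iff V by blast
qed

section \<open>Bump-free graphs satisfy (J0')\<close>

lemma J0'_premises_adjacent: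
  assumes V: "u \<in> V" "x \<in> V" "y \<in> V" "v \<in> V" and dis: "distinct [u, x, y, v]"
    and xI: "x \<in> interval V E u y" and yI: "y \<in> interval V E x v"
    and I: "interval V E u y \<inter> interval V E x v \<subseteq> {u, x, y, v}"
  shows "E x y"
proof (rule ccontr)
  assume "\<not> E x y"
  then have "d x y \<noteq> 1" using adj_if_d_eq_1 V by blast
  moreover have "d x y \<noteq> 0" using d_eq_0D V dis by auto
  ultimately obtain k where k: "d x y = Suc k" "k \<ge> 1"
    by (metis One_nat_def not0_implies_Suc not_less_eq_eq le0 antisym)
  then obtain w where w: "E x w" "d w y = k" using d_Suc_step V by blast
  have wV: "w \<in> V" using w adj_in_V2 by blast
  have xw: "d x w = 1" using w d_adj by blast
  have uxy: "d u x + d x y = d u y" and xyv: "d x y + d y v = d x v" using xI yI mem_interval by auto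
  have "d u w \<le> d u x + d x w" "d u y \<le> d u w + d w y" "d w v \<le> d w y + d y v" "d x v \<le> d x w + d w v"
    using d_triangle V wV by blast+
  then have "w \<in> interval V E u y" "w \<in> interval V E x v"
    using uxy xyv xw k w wV mem_interval by auto
  moreover have "w \<noteq> u" "w \<noteq> x" "w \<noteq> y" "w \<noteq> v"
    using w k xw uxy xyv adj_neq d_self V by auto
  ultimately show False using I by blast
qed

text \<open>For an edge \<open>xy\<close> with \<open>x\<close> closer to \<open>u\<close> and \<open>y\<close> closer to \<open>v\<close>, a common neighbour one
  step closer to both is found by walking from \<open>y\<close> towards \<open>v\<close> until the distance to \<open>u\<close>
  stops growing, and then back along a chain of common neighbours supplied by the triangle
  condition.\<close>
context
  fixes x y u v :: 'a and a b :: nat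
  assumes bf: "bump_free" and tc: "\<And>h. triangle_condition h" and exy: "E x y"
    and uV: "u \<in> V" and vV: "v \<in> V"
    and ux: "d u x = a" and uy: "d u y = Suc a" and vy: "d v y = b" and vx: "d v x = Suc b"
begin

lemma common_neighbour_from_flat_edge_at_y:
  assumes e: "E y q'" and q'v: "Suc (d q' v) = b" and uq': "d u q' = Suc a"
  shows "\<exists>w. E w x \<and> E w y \<and> d u w = a \<and> d v w = b"
proof -
  have xV: "x \<in> V" and yV: "y \<in> V" and q'V: "q' \<in> V" using exy e adj_in_V1 adj_in_V2 by auto
  obtain w where w: "E w y" "E w q'" "Suc (d u w) = Suc a"
    using tc[of "Suc a", unfolded triangle_condition_def, rule_format, OF uV e uy uq'] by blast
  have wV: "w \<in> V" using w adj_in_V1 by blast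
  have vq': "d v q' = b - 1" "1 \<le> b" using q'v d_sym[OF vV q'V] by auto
  have "d v x \<le> d v q' + d q' x" using d_triangle vV q'V xV by blast
  then have "2 \<le> d q' x" using vq' vx by linarith
  then have "w \<noteq> x" using w(2) d_adj_both by fastforce
  moreover have "w = x \<or> E w x"
    using bump_free_adj_or_eq[OF bf uV _ ux uy w(1)] w(3) exy adj_sym by auto
  ultimately have ewx: "E w x" by blast
  have "d v w \<le> d v q' + d q' w" "d v x \<le> d v w + d w x" using d_triangle vV q'V xV wV by blast+
  moreover have "d q' w = 1" "d w x = 1" using d_adj_both w(2) ewx by auto
  ultimately have "d v w = b" using vq' vx by linarith
  then show ?thesis using ewx w by auto
qed

lemma common_neighbour_from_flat_edge:
  assumes "d y q = i" "d y q + d q v = b" "E q q'" "Suc (d q' v) = d q v"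
    "d u q = Suc a + i" "d u q' = Suc a + i"
  shows "\<exists>w. E w x \<and> E w y \<and> d u w = a \<and> d v w = b"
  using assms
proof (induction i arbitrary: q q')
  case 0
  have yV: "y \<in> V" and qV: "q \<in> V" using exy 0(3) adj_in_V1 adj_in_V2 by auto
  then have "q = y" using 0(1) d_eq_0D by metis
  then show ?case using common_neighbour_from_flat_edge_at_y 0 d_self[OF yV] by simp
next
  have yV: "y \<in> V" using exy adj_in_V2 by auto
  case (Suc i)
  have qV: "q \<in> V" and q'V: "q' \<in> V" using Suc.prems(3) adj_in_V1 adj_in_V2 by auto
  have "d q y = Suc i" using Suc.prems(1) d_sym qV yV by metis
  then obtain p where p: "E q p" "d p y = i" using d_Suc_step qV yV by blast
  have pV: "p \<in> V" using p adj_in_V2 by blast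
  have yp: "d y p = i" using p d_sym pV yV by metis
  have "d u p \<le> d u y + d y p" "d u q \<le> d u p + d p q" "d p v \<le> d p q + d q v"
    "d y v \<le> d y p + d p v" "d p v \<le> d p q' + d q' v"
    using d_triangle uV yV pV qV q'V vV by blast+
  moreover have "d y v = b" "d p q = 1" using vy d_sym[OF vV yV] d_adj_both[OF p(1)] by auto
  ultimately have up: "d u p = Suc a + i" and pv: "d p v = b - i" and pq': "2 \<le> d p q'"
    and b: "Suc (Suc i) \<le> b" and q'v: "d q' v = b - Suc (Suc i)"
    using Suc.prems uy yp by linarith+
  obtain w where w: "E w q" "E w q'" "Suc (d u w) = Suc (Suc a + i)"
    using tc[of "Suc (Suc a + i)", unfolded triangle_condition_def, rule_format, OF uV Suc.prems(3)]
      Suc.prems(5,6) by auto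
  have wV: "w \<in> V" using w adj_in_V1 by blast
  have "p \<noteq> w" using pq' w(2) d_adj by fastforce
  moreover have "p = w \<or> E p w"
    by (rule bump_free_adj_or_eq[OF bf uV up _ _ adj_sym[OF p(1)] adj_sym[OF w(1)]])
      (use w(3) Suc.prems(5) in simp_all)
  ultimately have epw: "E p w" by blast
  have "d w v \<le> d w q' + d q' v" "d p v \<le> d p w + d w v" using d_triangle wV q'V vV pV by blast+
  moreover have "d w q' = 1" "d p w = 1" using d_adj w(2) epw by auto
  ultimately have "Suc (d w v) = d p v" using pv q'v b by linarith
  moreover have "d y p + d p v = b" using yp pv b by linarith
  moreover have "d u w = Suc a + i" using w(3) by simp
  ultimately show ?case using Suc.IH[of p w] yp epw up by blast
qed

lemma geodesic_step_not_closer: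
  assumes qV: "q \<in> V" and q: "d y q + d q v = b" "d u q = Suc a + d y q"
    and q': "E q q'" "Suc (d q' v) = d q v"
  shows "d u q' \<noteq> a + d y q"
proof
  assume uq': "d u q' = a + d y q"
  have xV: "x \<in> V" and yV: "y \<in> V" and q'V: "q' \<in> V" using exy q' adj_in_V1 adj_in_V2 by auto
  show False
  proof (cases "d y q")
    case 0
    then have qy: "q = y" using d_eq_0D yV qV by metis
    have "d v x \<le> d v q' + d q' x" using d_triangle vV q'V xV by blast
    moreover have "Suc (d v q') = b" using q q' qy d_self[OF yV] d_sym[OF vV q'V] by simp
    ultimately have "2 \<le> d q' x" using vx d_sym[OF q'V xV] by linarith
    moreover have "q' = x \<or> E q' x"
      by (rule bump_free_adj_or_eq[OF bf uV _ ux uy, of q'])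
        (use uq' 0 q'(1) qy exy adj_sym in simp_all)
    ultimately show False using d_self xV d_adj by fastforce
  next
    case (Suc i')
    have "d q y = Suc i'" using Suc d_sym qV yV by metis
    then obtain p where p: "E q p" "d p y = i'" using d_Suc_step qV yV by blast
    have pV: "p \<in> V" using p adj_in_V2 by blast
    have "d u p \<le> d u y + d y p" "d u q \<le> d u p + d p q" "d p v \<le> d p q' + d q' v"
      "d y v \<le> d y p + d p v"
      using d_triangle uV yV pV qV q'V vV by blast+
    moreover have "d y p = i'" "d p q = 1" "d y v = b"
      using d_sym[OF pV yV] p d_adj_both[OF p(1)] d_sym[OF vV yV] vy by auto
    ultimately have up: "d u p = a + d y q" and "2 \<le> d p q'"
      using q q' Suc uy by linarith+
    moreover have "p = q' \<or> E p q'"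
      by (rule bump_free_adj_or_eq[OF bf uV up uq' _ adj_sym[OF p(1)] q'(1)]) (use q(2) in simp)
    ultimately show False using d_self pV d_adj by fastforce
  qed
qed

lemma common_neighbour_along_geodesic:
  assumes uv: "d u v \<le> a + b"
  shows "q \<in> V \<Longrightarrow> d q v = r \<Longrightarrow> d y q + d q v = b \<Longrightarrow> d u q = Suc a + d y q \<Longrightarrow>
    \<exists>w. E w x \<and> E w y \<and> d u w = a \<and> d v w = b"
proof (induction r arbitrary: q)
  case 0
  then have "q = v" using d_eq_0D vV by blast
  then show ?case using 0 uv by simp
next
  have yV: "y \<in> V" using exy adj_in_V2 by auto
  case (Suc r)
  note qV = Suc.prems(1)
  obtain q' where q': "E q q'" "d q' v = r" using d_Suc_step qV vV Suc.prems(2) by blast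
  have q'V: "q' \<in> V" using q' adj_in_V2 by blast
  define i where "i = d y q"
  have "d y q' \<le> d y q + d q q'" "d y v \<le> d y q' + d q' v" "d u q' \<le> d u q + d q q'"
    "d u q \<le> d u q' + d q' q"
    using d_triangle yV qV q'V uV vV by blast+
  moreover have "d y v = b" "d q q' = 1" "d q' q = 1" using d_sym[OF vV yV] vy d_adj_both q' by auto
  ultimately have yq': "d y q' = Suc i" and "a + i \<le> d u q'" "d u q' \<le> Suc a + Suc i"
    using Suc.prems(2-4) q'(2) i_def by linarith+
  moreover have "d u q' \<noteq> a + i"
    using geodesic_step_not_closer[OF qV Suc.prems(3,4) q'(1)] Suc.prems(2) q'(2) i_def by simp
  ultimately consider "d u q' = Suc a + Suc i" | "d u q' = Suc a + i" by linarith
  then show ?case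
  proof cases
    case 1
    then show ?thesis using Suc.IH[OF q'V q'(2)] yq' Suc.prems(2,3) q'(2) i_def by simp
  next
    case 2
    then show ?thesis
      using common_neighbour_from_flat_edge[of q i q'] Suc.prems(2-4) q' i_def by simp
  qed
qed

lemma common_neighbour_if_not_between:
  assumes "d u v \<le> a + b"
  shows "\<exists>w. E w x \<and> E w y \<and> d u w = a \<and> d v w = b"
proof -
  have yV: "y \<in> V" using exy adj_in_V2 by blast
  then show ?thesis
    using common_neighbour_along_geodesic[OF assms yV refl] d_self[OF yV] d_sym[OF vV yV] vy uy
    by simp
qed

end

theorem axiom_J0'_if_bump_free:
  assumes bf: "bump_free" and nc5: "C5_free"
  shows "axiom_J0' V (interval V E)"
  unfolding axiom_J0'_def
proof (intro ballI impI)
  fix u x y v assume V: "u \<in> V" "x \<in> V" "y \<in> V" "v \<in> V"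
  assume dis: "distinct [u, x, y, v]" and xI: "x \<in> interval V E u y" and yI: "y \<in> interval V E x v"
    and I: "interval V E u y \<inter> interval V E x v \<subseteq> {u, x, y, v}"
  have exy: "E x y" using J0'_premises_adjacent[OF V dis xI yI I] .
  define a b where "a = d u x" and "b = d v y"
  have uy: "d u y = Suc a" and xv: "d x v = Suc (d y v)"
    using xI yI d_adj exy unfolding mem_interval a_def by auto
  then have vx: "d v x = Suc b" using d_sym V unfolding b_def by metis
  have "a \<noteq> 0" "b \<noteq> 0" using d_eq_0D V dis unfolding a_def b_def by auto
  show "x \<in> interval V E u v"
  proof (rule ccontr)
    assume "x \<notin> interval V E u v"
    moreover have "d u v \<le> d u x + d x v" using d_triangle V by blast
    ultimately have "d u v \<le> a + b" using V xv d_sym[OF V(3,4)] mem_interval unfolding a_def b_def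
      by auto
    then obtain w where w: "E w x" "E w y" "d u w = a" "d v w = b"
      using common_neighbour_if_not_between[OF bf bump_free_triangle_condition[OF bf nc5] exy V(1,4)]
        a_def b_def uy vx by blast
    have wV: "w \<in> V" using w adj_in_V1 by blast
    have "w \<in> interval V E u y" "w \<in> interval V E x v"
      using mem_interval wV w uy xv vx d_adj_both d_sym V unfolding b_def by auto
    moreover have "w \<noteq> u" "w \<noteq> v" using w d_self V \<open>a \<noteq> 0\<close> \<open>b \<noteq> 0\<close> by auto
    moreover have "w \<noteq> x" "w \<noteq> y" using w adj_neq by auto
    ultimately show False using I by blast
  qed
qed

end

section \<open>Minimal bumps\<close>

text \<open>\<open>j\<close> and \<open>m\<close> are the height and length of a bump of least size \<open>n = 2 * j + m\<close>.\<close>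
locale minimal_bump = conn_graph V E for V :: "'a set" and E +
  fixes j m :: nat
  assumes m_cases: "m = 2 \<or> m = 3" and no_C5: "C5_free"
    and no_smaller_bump: "no_bump_below (2*j+m)"
begin

abbreviation n :: nat where "n \<equiv> 2*j+m"

text \<open>A closed walk \<open>c 0, \<dots>, c n = c 0\<close> which climbs from \<open>c 0\<close> along a geodesic to a bump
  \<open>c j, \<dots>, c (j + m)\<close> and descends along a geodesic back to \<open>c 0\<close>.\<close>
definition bump_cycle :: "(nat \<Rightarrow> 'a) \<Rightarrow> bool" where
  "bump_cycle c \<longleftrightarrow> c n = c 0 \<and> (\<forall>k\<le>n. c k \<in> V) \<and> (\<forall>k<n. E (c k) (c (Suc k)))
     \<and> (\<forall>k\<le>n. d (c 0) (c k) = min k (n - k)) \<and> d (c j) (c (j+m)) = m"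

definition cycle_dist :: "nat \<Rightarrow> nat \<Rightarrow> nat" where
  "cycle_dist s t = min (t - s) (n - (t - s))"

text \<open>Bump cycles are shown to be isometric by induction on the distance along the cycle,
  simultaneously for all of them: a pair at the wrong distance yields, by \<open>shortcut_below\<close> and
  the replacement of one vertex, a bump cycle with such a pair closer along the cycle.\<close>
definition isometric_below :: "nat \<Rightarrow> bool" where
  "isometric_below L \<longleftrightarrow> (\<forall>c s t. bump_cycle c \<longrightarrow> s \<le> t \<longrightarrow> t \<le> n \<longrightarrow> cycle_dist s t < L \<longrightarrow>
     d (c s) (c t) = cycle_dist s t)"

lemma m_ge_2: "2 \<le> m"
  using m_cases by auto

lemma triangle_condition_below: "2*h+1 < n \<Longrightarrow> triangle_condition h"
  using triangle_condition_if_no_small_bump[OF no_C5 no_smaller_bump] by blast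

lemma n_le_bump_2:
  assumes "q \<in> V" "d q u = k" "d q v = k" "d q z = Suc k" "E u z" "E z v" "d u v = 2"
  shows "n \<le> 2*k+2"
  using no_bump_below_2[OF no_smaller_bump assms] .

lemma shortcut_below:
  assumes A: "A \<in> V" and e: "E P Q" "E Q R" and PR: "d P R = 2"
    and AP: "d A P = k" and AQ: "d A Q = Suc k" and AR: "d A R \<le> Suc k" and kn: "2*k+3 < n"
  obtains w where "E P w" "E w R" "d A w = k"
proof -
  have V: "P \<in> V" "Q \<in> V" "R \<in> V" using e adj_in_V1 adj_in_V2 by auto
  have "d A Q \<le> d A R + d R Q" using d_triangle A V by blast
  then have "k \<le> d A R" using AQ d_adj_both[OF e(2)] by linarith
  moreover have "d A R \<noteq> k" using n_le_bump_2[OF A AP _ AQ e PR] kn by fastforce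
  ultimately have AR': "d A R = Suc k" using AR by linarith
  obtain w where w: "E w Q" "E w R" "Suc (d A w) = Suc k"
    using triangle_condition_below[of "Suc k", unfolded triangle_condition_def, rule_format,
        OF _ A e(2) AQ AR'] kn by auto
  have "P = w \<or> E P w"
    by (rule adj_or_eq_if_common_upper_neighbour[OF no_smaller_bump _ A AP _ AQ e(1) adj_sym[OF w(1)]])
      (use kn w(3) in simp_all)
  moreover have "P \<noteq> w" using PR w(2) d_adj by fastforce
  ultimately show ?thesis using that w by blast
qed

context
  fixes c assumes C: "bump_cycle c"
begin

lemma c_in_V: "k \<le> n \<Longrightarrow> c k \<in> V" using C unfolding bump_cycle_def by blast
lemma c_adj: "k < n \<Longrightarrow> E (c k) (c (Suc k))" using C unfolding bump_cycle_def by blast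
lemma c_level: "k \<le> n \<Longrightarrow> d (c 0) (c k) = min k (n - k)" using C unfolding bump_cycle_def by blast
lemma c_bump: "d (c j) (c (j+m)) = m" using C unfolding bump_cycle_def by blast
lemma c_closed: "c n = c 0" using C unfolding bump_cycle_def by blast

lemma c0_in_V: "c 0 \<in> V" using c_in_V by simp

lemma j_ge_1: "j \<ge> 1"
proof (rule ccontr)
  assume "\<not> j \<ge> 1"
  then have j0: "j = 0" by simp
  then have "d (c 0) (c m) = 0" using c_level[of m] by simp
  then have "c m = c 0" using d_eq_0D c_in_V j0 by (metis c0_in_V le_add2)
  then show False using c_bump j0 d_self c0_in_V m_cases by auto
qed

lemma j_ge_2_if_m_3: "m = 3 \<Longrightarrow> j \<ge> 2"
proof (rule ccontr)
  assume m3: "m = 3" and "\<not> j \<ge> 2"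
  then have j: "j = 1" using j_ge_1 by simp
  have "d (c 0) (c 1) = 1" using c_level[of 1] j m3 by simp
  moreover have "d (c 0) (c 4) = 1" using c_level[of 4] j m3 by simp
  moreover have "d (c 1) (c 4) \<le> d (c 1) (c 0) + d (c 0) (c 4)" using d_triangle c_in_V j m3 by simp
  moreover have "d (c 1) (c 0) = d (c 0) (c 1)" using d_sym c_in_V j m3 by simp
  ultimately show False using c_bump j m3 by simp
qed

lemma c_level_up: "k \<le> j+1 \<Longrightarrow> d (c 0) (c k) = k"
  using c_level[of k] m_cases by auto

lemma c_level_down: "j+m-1 \<le> k \<Longrightarrow> k \<le> n \<Longrightarrow> d (c 0) (c k) = n - k"
  using c_level[of k] m_cases by auto

lemma d_c_le: "s + k \<le> n \<Longrightarrow> d (c s) (c (s+k)) \<le> k"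
proof (induction k)
  case 0 then show ?case using d_self c_in_V by simp
next
  case (Suc k)
  have "d (c s) (c (s + Suc k)) \<le> d (c s) (c (s+k)) + d (c (s+k)) (c (s + Suc k))"
    using d_triangle c_in_V Suc.prems by simp
  moreover have "d (c (s+k)) (c (s + Suc k)) = 1" using d_adj c_adj Suc.prems by simp
  ultimately show ?case using Suc by simp
qed

lemma d_c_le_cycle_dist:
  assumes "s \<le> t" "t \<le> n" shows "d (c s) (c t) \<le> cycle_dist s t"
proof -
  have a: "d (c s) (c t) \<le> t - s" using d_c_le[of s "t-s"] assms by simp
  have "d (c s) (c t) \<le> d (c s) (c 0) + d (c 0) (c t)" using d_triangle c_in_V assms c0_in_V by simp
  moreover have "d (c s) (c 0) = d (c 0) (c s)" using d_sym c_in_V assms c0_in_V by simp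
  moreover have "d (c 0) (c s) \<le> s" using c_level[of s] assms by simp
  moreover have "d (c 0) (c t) \<le> n - t" using c_level[of t] assms by simp
  ultimately have "d (c s) (c t) \<le> n - (t - s)" using assms by linarith
  then show ?thesis using a unfolding cycle_dist_def by simp
qed

lemma d_c_ascending:
  assumes "s \<le> t" "t \<le> j+1" shows "d (c s) (c t) = t - s"
proof -
  have tn: "t \<le> n" "s \<le> n" using assms m_cases by auto
  have "d (c 0) (c t) \<le> d (c 0) (c s) + d (c s) (c t)" using d_triangle c_in_V tn c0_in_V by simp
  moreover have "d (c s) (c t) \<le> t - s" using d_c_le[of s "t-s"] assms tn by simp
  ultimately show ?thesis using c_level_up[of s] c_level_up[of t] assms by simp
qed

lemma d_c_descending:
  assumes "j+m-1 \<le> s" "s \<le> t" "t \<le> n" shows "d (c s) (c t) = t - s"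
proof -
  have "d (c 0) (c s) \<le> d (c 0) (c t) + d (c t) (c s)" using d_triangle c_in_V assms c0_in_V by simp
  moreover have "d (c s) (c t) \<le> t - s" using d_c_le[of s "t-s"] assms by simp
  moreover have "d (c t) (c s) = d (c s) (c t)" using d_sym c_in_V assms by simp
  ultimately show ?thesis using c_level_down[of s] c_level_down[of t] assms by simp
qed

lemma d_c_bump_segment:
  assumes "j \<le> s" "s \<le> t" "t \<le> j+m"
  shows "d (c s) (c t) = t - s"
proof -
  have V: "c j \<in> V" "c s \<in> V" "c t \<in> V" "c (j+m) \<in> V" using c_in_V assms by auto
  have "d (c j) (c (j+m)) \<le> d (c j) (c s) + d (c s) (c (j+m))"
    "d (c s) (c (j+m)) \<le> d (c s) (c t) + d (c t) (c (j+m))"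
    using d_triangle V by blast+
  moreover have "d (c j) (c s) \<le> s - j" "d (c s) (c t) \<le> t - s" "d (c t) (c (j+m)) \<le> j + m - t"
    using d_c_le[of j "s-j"] d_c_le[of s "t-s"] d_c_le[of t "j+m-t"] assms by simp_all
  ultimately show ?thesis using c_bump assms by linarith
qed

lemma bump_cycle_reflect: "bump_cycle (\<lambda>k. c (n - k))"
  unfolding bump_cycle_def
proof (intro conjI allI impI)
  show "c (n - n) = c (n - 0)" using c_closed by simp
  fix k
  show "k \<le> n \<Longrightarrow> c (n - k) \<in> V" using c_in_V by simp
  show "k < n \<Longrightarrow> E (c (n - k)) (c (n - Suc k))"
  proof -
    assume k: "k < n"
    then have "E (c (n - Suc k)) (c (Suc (n - Suc k)))" using c_adj[of "n - Suc k"] by simp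
    moreover have "Suc (n - Suc k) = n - k" using k by simp
    ultimately show ?thesis using adj_sym by simp
  qed
  show "k \<le> n \<Longrightarrow> d (c (n - 0)) (c (n - k)) = min k (n - k)"
    using c_level[of "n-k"] c_closed by (simp add: min.commute)
next
  have "d (c (j+m)) (c j) = m" using c_bump d_sym c_in_V by simp
  moreover have "n - j = j + m" "n - (j+m) = j" by simp_all
  ultimately show "d (c (n - j)) (c (n - (j + m))) = m" by simp
qed

lemma bump_cycle_replace:
  assumes "1 \<le> r" "r < n" "E (c (r-1)) w" "E w (c (r+1))"
    "d (c 0) w = min r (n - r)" "r = j \<Longrightarrow> d w (c (j+m)) = m" "r = j+m \<Longrightarrow> d (c j) w = m"
  shows "bump_cycle (c(r := w))"
  unfolding bump_cycle_def
proof (intro conjI allI impI)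
  have "r \<noteq> n" "r \<noteq> 0" using assms m_cases by auto
  then show "(c(r := w)) n = (c(r := w)) 0" using c_closed by simp
  fix k
  show "k \<le> n \<Longrightarrow> (c(r := w)) k \<in> V" using c_in_V assms adj_in_V2 by simp
  show "k < n \<Longrightarrow> E ((c(r := w)) k) ((c(r := w)) (Suc k))"
  proof -
    assume k: "k < n"
    consider "k = r" | "Suc k = r" | "k \<noteq> r" "Suc k \<noteq> r" by blast
    then show ?thesis
    proof cases
      case 1 then show ?thesis using assms by simp
    next
      case 2 then show ?thesis using assms by auto
    next
      case 3 then show ?thesis using c_adj k by simp
    qed
  qed
  show "k \<le> n \<Longrightarrow> d ((c(r := w)) 0) ((c(r := w)) k) = min k (n - k)"
    using c_level assms by simp
next
  show "d ((c(r := w)) j) ((c(r := w)) (j + m)) = m"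
    using assms c_bump m_cases by auto
qed

lemma replacement_level:
  assumes "1 \<le> r" "r < n" "r \<le> j \<or> j+m \<le> r" "E (c (r-1)) w" "E w (c (r+1))"
  shows "d (c 0) w = min r (n - r)"
proof -
  have wV: "w \<in> V" using assms adj_in_V2 by blast
  have t1: "d (c 0) w \<le> d (c 0) (c (r-1)) + d (c (r-1)) w" using d_triangle c0_in_V c_in_V wV assms by simp
  have t2: "d (c 0) (c (r+1)) \<le> d (c 0) w + d w (c (r+1))" using d_triangle c0_in_V c_in_V wV assms by simp
  have t3: "d (c 0) w \<le> d (c 0) (c (r+1)) + d (c (r+1)) w" using d_triangle c0_in_V c_in_V wV assms by simp
  have t4: "d (c 0) (c (r-1)) \<le> d (c 0) w + d w (c (r-1))" using d_triangle c0_in_V c_in_V wV assms by simp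
  have e: "d (c (r-1)) w = 1" "d w (c (r+1)) = 1" "d (c (r+1)) w = 1" "d w (c (r-1)) = 1"
    using assms d_adj_both by auto
  show ?thesis
  proof (cases "r \<le> j")
    case True
    then have "d (c 0) (c (r-1)) = r - 1" "d (c 0) (c (r+1)) = r + 1" using c_level_up by auto
    moreover have "min r (n - r) = r" using True by simp
    ultimately show ?thesis using t1 t2 e assms by linarith
  next
    case False
    then have r: "r \<ge> j+m" using assms by blast
    then have "d (c 0) (c (r-1)) = n - (r - 1)" "d (c 0) (c (r+1)) = n - (r + 1)"
      using c_level_down assms m_cases by auto
    moreover have "min r (n - r) = n - r" using r by simp
    ultimately show ?thesis using t3 t4 e assms r by linarith
  qed
qed

end

context
  fixes c assumes C: "bump_cycle c"
begin

lemma no_apex_over_2_bump: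
  assumes m2: "m = 2" and jj: "2 \<le> j"
    and w: "E w (c j)" "E w (c (j+1))" "E w (c (j+2))" "d (c 0) w = j"
  shows False
proof -
  have p: "c 0 \<in> V" using c0_in_V[OF C] .
  have V: "c j \<in> V" "c (j+1) \<in> V" "c (j+2) \<in> V" using c_in_V[OF C] m2 by auto
  have L: "d (c 0) (c j) = j" "d (c 0) (c (j+1)) = Suc j" "d (c 0) (c (j+2)) = j"
    using c_level_up[OF C, of j] c_level_up[OF C, of "j+1"] c_level_down[OF C, of "j+2"] m2 by auto
  have E1: "E (c j) (c (j+1))" "E (c (j+1)) (c (j+2))" using c_adj[OF C] m2 by auto
  have uv: "d (c j) (c (j+2)) = 2" using c_bump[OF C] m2 by simp
  have N: "4 < n" using m2 jj by simp
  have low: "\<not> E s (c (j+1)) \<and> s \<noteq> c (j+1)" if "s \<in> V" "Suc (d (c 0) s) = j" for s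
    using d_ge_2_if_levels_differ_by_2[OF p that(1) V(2)] L that(2) by auto
  have no_C4: False if s: "E s (c j)" "E s (c (j+2))" "Suc (d (c 0) s) = j" for s
  proof -
    have sV: "s \<in> V" using s adj_in_V1 by blast
    have "d s (c (j+1)) = 2"
      using d_eq_2_if_induced_path[OF s(1) E1(1)] low[OF sV s(3)] by blast
    then show False using no_induced_C4[OF no_smaller_bump N s(1) E1 adj_sym[OF s(2)]] uv by blast
  qed
  obtain t where t: "E t (c j)" "E t w" "Suc (d (c 0) t) = j"
    using triangle_condition_below[of j, unfolded triangle_condition_def, rule_format,
        OF _ p adj_sym[OF w(1)] L(1) w(4)] m2 by auto
  obtain t' where t': "E t' w" "E t' (c (j+2))" "Suc (d (c 0) t') = j"
    using triangle_condition_below[of j, unfolded triangle_condition_def, rule_format,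
        OF _ p w(3) w(4) L(3)] m2 by auto
  have tV: "t \<in> V" "t' \<in> V" using t t' adj_in_V1 by auto
  have "t = t' \<or> E t t'"
    by (rule adj_or_eq_if_common_upper_neighbour[OF no_smaller_bump, of "j-1" "c 0" t t' w])
      (use p t adj_sym[OF t'(1)] t' w m2 jj in simp_all)
  then show False
  proof
    assume "t = t'"
    then show False using no_C4[of t] t t' by blast
  next
    assume tt': "E t t'"
    have "d (c j) t' = 2"
      using d_eq_2_if_induced_path[OF adj_sym[OF t(1)] tt'] no_C4[of t'] t' t L(1)
      by (metis Suc_n_not_n adj_sym)
    moreover have "d t (c (j+2)) = 2"
      using d_eq_2_if_induced_path[OF tt' t'(2)] no_C4[of t] t t' L(3) by (metis Suc_n_not_n)
    ultimately have "E (c (j+1)) t"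
      using pentagon_apex_adjacent[OF no_C5 no_smaller_bump N, of "c j" t t' "c (j+2)" "c (j+1)"]
        t(1) tt' t'(2) E1 uv adj_sym by blast
    then show False using low[OF tV(1) t(3)] adj_sym by blast
  qed
qed

lemma no_apex_over_3_bump:
  assumes m3: "m = 3" and w: "E w (c (j+1))" "E w (c (j+2))" "d (c 0) w = j"
  shows False
proof -
  have p: "c 0 \<in> V" using c0_in_V[OF C] .
  have V: "c j \<in> V" "c (j+3) \<in> V" using c_in_V[OF C] m3 by auto
  have L: "d (c 0) (c j) = j" "d (c 0) (c (j+1)) = Suc j" "d (c 0) (c (j+2)) = Suc j"
    "d (c 0) (c (j+3)) = j"
    using c_level_up[OF C, of j] c_level_up[OF C, of "j+1"] c_level_down[OF C, of "j+2"]
      c_level_down[OF C, of "j+3"] m3 by auto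
  have E1: "E (c j) (c (j+1))" "E (c (j+2)) (c (j+3))"
    using c_adj[OF C, of j] c_adj[OF C, of "j+2"] m3 by (auto simp: numeral_3_eq_3)
  have uv: "d (c j) (c (j+3)) = 3" using c_bump[OF C] m3 by simp
  have kn: "2*j+2 < n" using m3 by simp
  have "c j = w \<or> E (c j) w"
    using adj_or_eq_if_common_upper_neighbour[OF no_smaller_bump kn p L(1) w(3) L(2) E1(1)
        adj_sym[OF w(1)]] .
  moreover have "w = c (j+3) \<or> E w (c (j+3))"
    using adj_or_eq_if_common_upper_neighbour[OF no_smaller_bump kn p w(3) L(4) L(3) w(2) E1(2)] .
  ultimately have "d (c j) (c (j+3)) \<le> 2"
    using d_triangle[OF V(1) adj_in_V1[OF w(1)] V(2)] d_adj d_self V w(2) E1(2) by fastforce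
  then show False using uv by simp
qed

lemma replacement_keeps_2_bump:
  assumes m2: "m = 2" and jj: "2 \<le> j" and w: "E w (c (j+1))" "E w (c (j+3))"
  shows "d (c j) w = 2"
proof -
  have p: "c 0 \<in> V" using c0_in_V[OF C] .
  have wV: "w \<in> V" using w adj_in_V1 by blast
  have V: "c j \<in> V" "c (j+1) \<in> V" "c (j+2) \<in> V" "c (j+3) \<in> V" using c_in_V[OF C] m2 jj by auto
  have L: "d (c 0) (c (j+1)) = j+1" "d (c 0) (c (j+3)) = j - 1"
    using c_level_up[OF C, of "j+1"] c_level_down[OF C, of "j+3"] m2 jj by auto
  have E1: "E (c j) (c (j+1))" "E (c (j+1)) (c (j+2))" "E (c (j+2)) (c (j+3))"
    using c_adj[OF C, of j] c_adj[OF C, of "j+1"] c_adj[OF C, of "j+2"] m2 jj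
    by (auto simp: numeral_3_eq_3)
  have uv: "d (c j) (c (j+2)) = 2" using c_bump[OF C] m2 by simp
  have N: "4 < n" using m2 jj by simp
  have "d (c (j+1)) (c (j+3)) \<ge> 2" using d_ge_2_if_levels_differ_by_2[OF p V(4) V(2)] L jj d_sym V
    by simp
  moreover have "d (c (j+1)) (c (j+3)) \<le> 2" using d_triangle[OF V(2,3,4)] E1 d_adj by simp
  ultimately have far: "d (c (j+1)) (c (j+3)) = 2" by simp
  have "w = c (j+2) \<or> E w (c (j+2))"
  proof (rule ccontr)
    assume "\<not> (w = c (j+2) \<or> E w (c (j+2)))"
    then have "d (c (j+2)) w = 2"
      using d_eq_2_if_induced_path[OF adj_sym[OF E1(2)] adj_sym[OF w(1)]] adj_sym by metis
    then show False using no_induced_C4[OF no_smaller_bump N E1(2,3) adj_sym[OF w(2)] w(1)] far by blast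
  qed
  then show ?thesis
  proof
    assume "E w (c (j+2))"
    have "d (c 0) w \<le> d (c 0) (c (j+3)) + d (c (j+3)) w" "d (c 0) (c (j+1)) \<le> d (c 0) w + d w (c (j+1))"
      using d_triangle p V wV by blast+
    then have "d (c 0) w = j" using L w d_adj_both jj by fastforce
    then have "\<not> E (c j) w" using no_apex_over_2_bump[OF m2 jj] w(1) \<open>E w (c (j+2))\<close> adj_sym by blast
    moreover have "c j \<noteq> w" using uv \<open>E w (c (j+2))\<close> d_adj by fastforce
    moreover have "d (c j) w \<le> 2" using d_triangle[OF V(1,2) wV] E1 w d_adj_both by fastforce
    ultimately show ?thesis using d_le_1_cases V(1) wV by fastforce
  qed (use uv in simp)
qed

lemma d_bump_start_ne_2:
  assumes m3: "m = 3" and w: "E w (c (j+2))" "d (c 0) w = j" "d (c (j+1)) w = 2"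
  shows "d (c j) w \<noteq> 2"
proof
  assume jw: "d (c j) w = 2"
  have jj: "2 \<le> j" using j_ge_2_if_m_3[OF C] m3 by blast
  have p: "c 0 \<in> V" using c0_in_V[OF C] .
  have V: "c j \<in> V" "c (j+1) \<in> V" "c (j+2) \<in> V" using c_in_V[OF C] m3 by auto
  have wV: "w \<in> V" using w adj_in_V1 by blast
  obtain x where x: "E (c j) x" "E x w" using d_eq_2_common_neighbour[OF V(1) wV jw] by blast
  have xV: "x \<in> V" using x adj_in_V2 by blast
  have L: "d (c 0) (c j) = j" "d (c 0) (c (j+1)) = Suc j" "d (c 0) (c (j+2)) = Suc j"
    using c_level_up[OF C, of j] c_level_up[OF C, of "j+1"] c_level_down[OF C, of "j+2"] m3 by auto
  have E1: "E (c j) (c (j+1))" "E (c (j+1)) (c (j+2))" using c_adj[OF C] m3 by auto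
  have uv: "d (c j) (c (j+2)) = 2" using d_c_bump_segment[OF C, of j "j+2"] m3 by simp
  have N: "4 < n" using m3 jj by simp
  have "d (c 0) x \<le> Suc j" using d_triangle[OF p wV xV] w(2) x d_adj_both by fastforce
  moreover have "d (c 0) x \<noteq> Suc j" using n_le_bump_2[OF p L(1) w(2) _ x jw] m3 by fastforce
  ultimately have xl: "d (c 0) x \<le> j" by simp
  then have nx: "x \<noteq> c (j+1)" "x \<noteq> c (j+2)" using L by auto
  consider "E x (c (j+1))" "E x (c (j+2))" | "E x (c (j+1))" "\<not> E x (c (j+2))"
    | "\<not> E x (c (j+1))" "E x (c (j+2))" | "\<not> E x (c (j+1))" "\<not> E x (c (j+2))" by blast
  then show False
  proof cases
    case 1
    have "d (c 0) (c (j+1)) \<le> d (c 0) x + d x (c (j+1))" using d_triangle p xV V by blast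
    then have "d (c 0) x = j" using xl L 1 d_adj by fastforce
    then show False using no_apex_over_3_bump[OF m3 1] by blast
  next
    case 2
    have "d x (c (j+2)) = 2" using d_eq_2_if_induced_path[OF 2(1) E1(2)] 2(2) nx by blast
    then show False
      using no_induced_C4[OF no_smaller_bump N 2(1) E1(2) adj_sym[OF w(1)] adj_sym[OF x(2)]] w(3)
      by blast
  next
    case 3
    have "d (c (j+1)) x = 2" using d_eq_2_if_induced_path[OF E1(2) adj_sym[OF 3(2)]] 3(1) nx adj_sym
      by metis
    then show False using no_induced_C4[OF no_smaller_bump N E1 adj_sym[OF 3(2)] adj_sym[OF x(1)]] uv
      by blast
  next
    case 4
    have "d (c (j+2)) x = 2"
      using d_eq_2_if_induced_path[OF adj_sym[OF w(1)] adj_sym[OF x(2)]] 4 nx adj_sym by metis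
    moreover have "d (c (j+1)) x = 2"
      using d_eq_2_if_induced_path[OF adj_sym[OF E1(1)] x(1)] 4 nx adj_sym by metis
    ultimately have "E (c j) (c (j+2))"
      using pentagon_apex_adjacent[OF no_C5 no_smaller_bump N, of "c (j+1)" "c (j+2)" w x "c j"]
        E1 w(1,3) x adj_sym by blast
    then show False using uv d_adj by simp
  qed
qed

lemma replacement_keeps_3_bump:
  assumes m3: "m = 3" and w: "E w (c (j+2))" "d (c 0) w = j"
  shows "d (c j) w = 3"
proof -
  have jj: "2 \<le> j" using j_ge_2_if_m_3[OF C] m3 by blast
  have wV: "w \<in> V" using w adj_in_V1 by blast
  have V: "c j \<in> V" "c (j+1) \<in> V" "c (j+2) \<in> V" using c_in_V[OF C] m3 by auto
  have E1: "E (c j) (c (j+1))" "E (c (j+1)) (c (j+2))" using c_adj[OF C] m3 by auto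
  have uv: "d (c j) (c (j+2)) = 2" using d_c_bump_segment[OF C, of j "j+2"] m3 by simp
  have "\<not> E w (c (j+1))" using no_apex_over_3_bump[OF m3 _ w(1,2)] adj_sym by blast
  moreover have "w \<noteq> c (j+1)" using w(2) c_level_up[OF C, of "j+1"] by auto
  ultimately have w1: "d (c (j+1)) w = 2"
    using d_eq_2_if_induced_path[OF E1(2) adj_sym[OF w(1)]] adj_sym by metis
  have "d (c j) w \<le> 3"
    using d_triangle[OF V(1,2) wV] d_triangle[OF V(2,3) wV] E1 w(1) d_adj_both by fastforce
  moreover have "d (c j) w \<noteq> 2" using d_bump_start_ne_2[OF m3 w w1] .
  moreover have "c j \<noteq> w" using uv w(1) d_adj by fastforce
  moreover have "\<not> E (c j) w"
  proof
    assume "E (c j) w"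
    moreover have "4 < n" using jj m3 by simp
    ultimately show False
      using no_induced_C4[OF no_smaller_bump _ E1 adj_sym[OF w(1)]] uv w1 adj_sym by blast
  qed
  ultimately show ?thesis using d_le_1_cases V(1) wV by fastforce
qed

lemma bump_cycle_replace_outside:
  assumes n5: "5 \<le> n" and r: "1 \<le> r" "r < n" "r < j \<or> j + m \<le> r"
    and w: "E (c (r-1)) w" "E w (c (r+1))"
  shows "bump_cycle (c(r := w))"
proof (rule bump_cycle_replace[OF C r(1,2) w])
  show lev: "d (c 0) w = min r (n - r)" using replacement_level[OF C r(1,2) _ w] r(3) by auto
  show "r = j \<Longrightarrow> d w (c (j+m)) = m" using r(3) m_cases by auto
  assume rj: "r = j + m"
  show "d (c j) w = m"
  proof (cases "m = 2")
    case True
    have "E w (c (j+1))" "E w (c (j+3))" using w rj True adj_sym by (simp_all add: numeral_3_eq_3)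
    moreover have "2 \<le> j" using n5 True by simp
    ultimately show ?thesis using replacement_keeps_2_bump[OF True] True by simp
  next
    case False
    then have m3: "m = 3" using m_cases by blast
    have "E w (c (j+2))" "d (c 0) w = j" using w(1) lev rj m3 adj_sym by simp_all
    then show ?thesis using replacement_keeps_3_bump[OF m3] m3 by simp
  qed
qed

lemma apex_neighbours_not_close_2:
  assumes m2: "m = 2" and jj: "2 \<le> j" and close: "d (c 1) (c (n-1)) \<le> 1"
  shows False
proof -
  have p: "c 0 \<in> V" and a: "c 1 \<in> V" and b: "c (n-1) \<in> V" using c_in_V[OF C] jj by auto
  have V: "c j \<in> V" "c (j+1) \<in> V" "c (j+2) \<in> V" using c_in_V[OF C] m2 by auto
  have E1: "E (c j) (c (j+1))" "E (c (j+1)) (c (j+2))" using c_adj[OF C] m2 by auto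
  have uv: "d (c j) (c (j+2)) = 2" using c_bump[OF C] m2 by simp
  have D: "d (c 1) (c j) = j - 1" "d (c 1) (c (j+1)) = Suc (j-1)" "d (c (n-1)) (c (j+2)) = j - 1"
    "d (c 0) (c 1) = 1" "d (c 0) (c (j+1)) = Suc j" "d (c 0) (c (j+2)) = j"
    using d_c_ascending[OF C, of 1 j] d_c_ascending[OF C, of 1 "j+1"] c_level_up[OF C, of 1]
      d_c_descending[OF C, of "j+2" "n-1"] d_sym[OF b V(3)] c_level_up[OF C, of "j+1"]
      c_level_down[OF C, of "j+2"] m2 jj by auto
  have "d (c 1) (c (j+2)) \<le> d (c 1) (c (n-1)) + d (c (n-1)) (c (j+2))"
    "d (c 0) (c (j+2)) \<le> d (c 0) (c 1) + d (c 1) (c (j+2))"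
    using d_triangle p a b V by blast+
  then consider "d (c 1) (c (j+2)) = j - 1" | "d (c 1) (c (j+2)) = Suc (j-1)"
    using close D jj by linarith
  then show False
  proof cases
    case 1
    then show False using n_le_bump_2[OF a D(1) 1 D(2) E1 uv] m2 jj by simp
  next
    case 2
    obtain w where w: "E w (c (j+1))" "E w (c (j+2))" "Suc (d (c 1) w) = Suc (j-1)"
      using triangle_condition_below[of "Suc (j-1)", unfolded triangle_condition_def, rule_format,
          OF _ a E1(2) D(2) 2] m2 jj by auto
    have wV: "w \<in> V" using w adj_in_V1 by blast
    have "c j = w \<or> E (c j) w"
      by (rule adj_or_eq_if_common_upper_neighbour[OF no_smaller_bump _ a D(1) _ D(2) E1(1)
            adj_sym[OF w(1)]]) (use w m2 jj in simp_all)
    moreover have "c j \<noteq> w" using uv w(2) d_adj by fastforce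
    moreover have "d (c 0) w \<le> d (c 0) (c 1) + d (c 1) w" "d (c 0) (c (j+1)) \<le> d (c 0) w + d w (c (j+1))"
      using d_triangle p a wV V by blast+
    then have "d (c 0) w = j" using D w d_adj jj by fastforce
    ultimately show False using no_apex_over_2_bump[OF m2 jj _ w(1,2)] adj_sym by blast
  qed
qed

lemma apex_neighbours_not_close_3:
  assumes m3: "m = 3" and close: "d (c 1) (c (n-1)) \<le> 1"
  shows False
proof -
  have jj: "2 \<le> j" using j_ge_2_if_m_3[OF C m3] .
  have p: "c 0 \<in> V" and a: "c 1 \<in> V" and b: "c (n-1) \<in> V" using c_in_V[OF C] jj by auto
  have V: "c (j+1) \<in> V" "c (j+2) \<in> V" "c (j+3) \<in> V" using c_in_V[OF C] m3 by auto
  have E1: "E (c (j+1)) (c (j+2))" "E (c (j+2)) (c (j+3))"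
    using c_adj[OF C, of "j+1"] c_adj[OF C, of "j+2"] m3 by (auto simp: numeral_3_eq_3)
  have D: "d (c 1) (c (j+1)) = j" "d (c (n-1)) (c (j+3)) = j - 1" "d (c 0) (c 1) = 1"
    "d (c 0) (c (j+1)) = Suc j" "d (c 0) (c (j+2)) = Suc j" "d (c (j+1)) (c (j+3)) = 2"
    using d_c_ascending[OF C, of 1 "j+1"] d_c_descending[OF C, of "j+3" "n-1"] d_sym[OF b V(3)]
      c_level_up[OF C, of 1] c_level_up[OF C, of "j+1"] c_level_down[OF C, of "j+2"]
      d_c_bump_segment[OF C, of "j+1" "j+3"] m3 jj by auto
  have "d (c 1) (c (j+3)) \<le> d (c 1) (c (n-1)) + d (c (n-1)) (c (j+3))"
    "d (c 0) (c (j+2)) \<le> d (c 0) (c 1) + d (c 1) (c (j+2))"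
    "d (c 1) (c (j+2)) \<le> d (c 1) (c (j+1)) + d (c (j+1)) (c (j+2))"
    "d (c 1) (c (j+2)) \<le> d (c 1) (c (j+3)) + d (c (j+3)) (c (j+2))"
    using d_triangle p a b V by blast+
  moreover have "d (c (j+1)) (c (j+2)) = 1" "d (c (j+3)) (c (j+2)) = 1" using d_adj_both E1 by auto
  ultimately have "d (c 1) (c (j+3)) \<le> j" and
    cases: "d (c 1) (c (j+2)) = j \<or> d (c 1) (c (j+2)) = Suc j \<and> d (c 1) (c (j+3)) = j"
    using close D jj by linarith+
  from cases show False
  proof
    assume 2: "d (c 1) (c (j+2)) = j"
    obtain w where w: "E w (c (j+1))" "E w (c (j+2))" "Suc (d (c 1) w) = j"
      using triangle_condition_below[of j, unfolded triangle_condition_def, rule_format,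
          OF _ a E1(1) D(1) 2] m3 by auto
    have wV: "w \<in> V" using w adj_in_V1 by blast
    have "d (c 0) w \<le> d (c 0) (c 1) + d (c 1) w" "d (c 0) (c (j+1)) \<le> d (c 0) w + d w (c (j+1))"
      using d_triangle p a wV V by blast+
    then have "d (c 0) w = j" using D w d_adj by fastforce
    then show False using no_apex_over_3_bump[OF m3 w(1,2)] by blast
  next
    assume "d (c 1) (c (j+2)) = Suc j \<and> d (c 1) (c (j+3)) = j"
    then show False using n_le_bump_2[OF a D(1) _ _ E1 D(6)] m3 by simp
  qed
qed

lemma apex_neighbours_at_distance_2:
  assumes n5: "5 \<le> n"
  shows "d (c 1) (c (n-1)) = 2"
proof -
  have "d (c 1) (c (n-1)) \<le> d (c 1) (c 0) + d (c 0) (c (n-1))"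
    using d_triangle[OF c_in_V[OF C, of 1] c0_in_V[OF C] c_in_V[OF C, of "n-1"]] n5 by simp
  moreover have "d (c 1) (c 0) = 1" "d (c 0) (c (n-1)) = 1"
    using c_level[OF C, of 1] c_level[OF C, of "n-1"] d_sym c_in_V[OF C] n5 by auto
  moreover have "\<not> d (c 1) (c (n-1)) \<le> 1"
  proof
    assume "d (c 1) (c (n-1)) \<le> 1"
    then show False
      using apex_neighbours_not_close_2 apex_neighbours_not_close_3 n5 m_cases by fastforce
  qed
  ultimately show ?thesis by simp
qed

end

section \<open>Bump cycles are isometric\<close>

context
  fixes c assumes C: "bump_cycle c"
begin

lemma lower_bound_short_way_step:
  assumes IH: "isometric_below (t - s)"
    and st: "1 \<le> s" "s + 3 \<le> t" "j + m < t" "t < n" "2 * (t - s) \<le> n"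
  shows "t - s \<le> d (c s) (c t)"
proof (rule ccontr)
  assume short: "\<not> t - s \<le> d (c s) (c t)"
  define L where "L = t - s"
  have L: "3 \<le> L" "2 * L \<le> n" "t - 2 - s = L - 2" "t - 1 - s = Suc (L - 2)" using st L_def by auto
  have iso: "d (c' s') (c' t') = cycle_dist s' t'"
    if "bump_cycle c'" "s' \<le> t'" "t' \<le> n" "cycle_dist s' t' < L" for c' s' t'
    using IH that unfolding isometric_below_def L_def by blast
  have cd: "cycle_dist s (t-2) = L - 2" "cycle_dist s (t-1) = Suc (L-2)" "cycle_dist (t-2) t = 2"
    using L st unfolding cycle_dist_def by auto
  have A: "c s \<in> V" using c_in_V[OF C] st by simp
  have r: "s \<le> t-2" "t-2 \<le> n" "s \<le> t-1" "t-1 \<le> n" "t-2 \<le> t" "t \<le> n" using st by linarith+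
  have AP: "d (c s) (c (t-2)) = L - 2" and AQ: "d (c s) (c (t-1)) = Suc (L-2)"
    and PR: "d (c (t-2)) (c t) = 2"
    using iso[OF C r(1,2)] iso[OF C r(3,4)] iso[OF C r(5,6)] cd L(1) by simp_all
  have t12: "Suc (t-2) = t-1" "Suc (t-1) = t" using st by simp_all
  have e: "E (c (t-2)) (c (t-1))" "E (c (t-1)) (c t)"
    using c_adj[OF C, of "t-2"] c_adj[OF C, of "t-1"] st t12 by simp_all
  have "d (c s) (c t) \<le> Suc (L-2)" "2 * (L-2) + 3 < n" using short L unfolding L_def by simp_all
  then obtain w where w: "E (c (t-2)) w" "E w (c t)" "d (c s) w = L - 2"
    using shortcut_below[OF A e PR AP AQ] by blast
  have "5 \<le> n" "1 \<le> t - 1" "t - 1 < n" "t - 1 < j \<or> j + m \<le> t - 1" using st by linarith+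
  moreover have "E (c (t - 1 - 1)) w" "E w (c (t - 1 + 1))" using w st by (simp_all add: numeral_2_eq_2)
  ultimately have C': "bump_cycle (c(t-1 := w))" by (rule bump_cycle_replace_outside[OF C])
  have "s \<noteq> t - 1" using st by linarith
  then have "d (c s) w = Suc (L - 2)" using iso[OF C' r(3,4)] cd L(1) by simp
  then show False using w(3) by simp
qed

lemma lower_bound_long_way_step:
  assumes IH: "isometric_below (n - (t - s))"
    and st: "2 \<le> s" "s < t" "t < n" "n < 2 * (t - s)" "3 \<le> n - (t - s)"
  shows "n - (t - s) \<le> d (c s) (c t)"
proof (rule ccontr)
  assume short: "\<not> n - (t - s) \<le> d (c s) (c t)"
  define L where "L = n - (t - s)"
  have L: "3 \<le> L" "2 * L < n" using st L_def by auto
  have iso: "d (c' s') (c' t') = cycle_dist s' t'"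
    if "bump_cycle c'" "s' \<le> t'" "t' \<le> n" "cycle_dist s' t' < L" for c' s' t'
    using IH that unfolding isometric_below_def L_def by blast
  have cd: "cycle_dist (s-2) t = L - 2" "cycle_dist (s-1) t = Suc (L-2)" "cycle_dist (s-2) s = 2"
    using L st unfolding cycle_dist_def L_def by auto
  have r: "s-2 \<le> t" "t \<le> n" "s-1 \<le> t" "s-2 \<le> s" "s \<le> n" using st by linarith+
  have V: "c t \<in> V" "c (s-2) \<in> V" "c (s-1) \<in> V" "c s \<in> V" using c_in_V[OF C] st by auto
  have AP: "d (c t) (c (s-2)) = L - 2" and AQ: "d (c t) (c (s-1)) = Suc (L-2)"
    and PR: "d (c (s-2)) (c s) = 2"
    using iso[OF C r(1,2)] iso[OF C r(3,2)] iso[OF C r(4,5)] cd L(1) d_sym V by simp_all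
  have s12: "Suc (s-2) = s-1" "Suc (s-1) = s" using st by simp_all
  have e: "E (c (s-2)) (c (s-1))" "E (c (s-1)) (c s)"
    using c_adj[OF C, of "s-2"] c_adj[OF C, of "s-1"] st s12 by simp_all
  have "d (c t) (c s) \<le> Suc (L-2)" "2 * (L-2) + 3 < n" using short L d_sym V unfolding L_def by simp_all
  then obtain w where w: "E (c (s-2)) w" "E w (c s)" "d (c t) w = L - 2"
    using shortcut_below[OF V(1) e PR AP AQ] by blast
  have "5 \<le> n" "1 \<le> s - 1" "s - 1 < n" "s - 1 < j \<or> j + m \<le> s - 1" using st m_cases by linarith+
  moreover have "E (c (s - 1 - 1)) w" "E w (c (s - 1 + 1))" using w st by (simp_all add: numeral_2_eq_2)
  ultimately have C': "bump_cycle (c(s-1 := w))" by (rule bump_cycle_replace_outside[OF C])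
  have "t \<noteq> s - 1" using st by linarith
  then have "d w (c t) = Suc (L - 2)" using iso[OF C' r(3,2)] cd L(1) by simp
  then show False using w(3) d_sym V(1) adj_in_V2[OF w(1)] by simp
qed

end

lemma lower_bound_short_way:
  assumes C: "bump_cycle c" and IH: "isometric_below (t - s)" and st: "s \<le> t" "t \<le> n" "2 * (t - s) \<le> n"
  shows "t - s \<le> d (c s) (c t)"
proof -
  consider "t \<le> j+1" | "j+m-1 \<le> s" | "j \<le> s" "t \<le> j+m" | "s = 0" | "t = n"
    | "1 \<le> s" "s + 3 \<le> t" "t < n" "j + m < t" | "1 \<le> s" "s + 3 \<le> t" "t < n" "s < j" "t \<le> j + m"
    using st by linarith
  then show ?thesis
  proof cases
    case 1 then show ?thesis using d_c_ascending[OF C st(1)] by simp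
  next
    case 2 then show ?thesis using d_c_descending[OF C 2 st(1,2)] by simp
  next
    case 3 then show ?thesis using d_c_bump_segment[OF C 3(1) st(1) 3(2)] by simp
  next
    case 4 then show ?thesis using c_level[OF C, of t] st by simp
  next
    case 5
    have "d (c s) (c n) = d (c 0) (c s)"
      using c_closed[OF C] d_sym c_in_V[OF C] st 5 by (metis le0)
    then show ?thesis using c_level[OF C, of s] st 5 by simp
  next
    case 6 then show ?thesis using lower_bound_short_way_step[OF C IH] st by blast
  next
    case 7
    have h: "(n - s) - (n - t) = t - s" "n - (n - t) = t" "n - (n - s) = s" using st by auto
    have "(n - s) - (n - t) \<le> d ((\<lambda>k. c (n - k)) (n - t)) ((\<lambda>k. c (n - k)) (n - s))"
      by (rule lower_bound_short_way_step[OF bump_cycle_reflect[OF C]]) (use IH h st 7 in simp_all)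
    moreover have "d (c t) (c s) = d (c s) (c t)" using d_sym c_in_V[OF C] st by simp
    ultimately show ?thesis using h by simp
  qed
qed

lemma lower_bound_long_way:
  assumes C: "bump_cycle c" and IH: "isometric_below (n - (t - s))" and st: "s \<le> t" "t \<le> n" "n < 2 * (t - s)"
  shows "n - (t - s) \<le> d (c s) (c t)"
proof -
  consider "s = 0" | "t = n" | "s = 1" "t = n - 1" | "2 \<le> s" "t < n" "3 \<le> n - (t - s)"
    | "s = 1" "t < n - 1"
    using st by linarith
  then show ?thesis
  proof cases
    case 1 then show ?thesis using c_level[OF C, of t] st by simp
  next
    case 2
    have "d (c s) (c n) = d (c 0) (c s)"
      using c_closed[OF C] d_sym c_in_V[OF C] st 2 by (metis le0)
    then show ?thesis using c_level[OF C, of s] st 2 by simp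
  next
    case 3 then show ?thesis using apex_neighbours_at_distance_2[OF C] st by simp
  next
    case 4 then show ?thesis using lower_bound_long_way_step[OF C IH 4(1) _ 4(2) _ 4(3)] st by simp
  next
    case 5
    have h: "n - ((n - s) - (n - t)) = n - (t - s)" "n - (n - t) = t" "n - (n - s) = s"
      using st by auto
    have "n - ((n - s) - (n - t)) \<le> d ((\<lambda>k. c (n - k)) (n - t)) ((\<lambda>k. c (n - k)) (n - s))"
      by (rule lower_bound_long_way_step[OF bump_cycle_reflect[OF C]]) (use IH h st 5 in simp_all)
    moreover have "d (c t) (c s) = d (c s) (c t)" using d_sym c_in_V[OF C] st by simp
    ultimately show ?thesis using h by simp
  qed
qed

lemma bump_cycles_isometric_below: "isometric_below L"
proof (induction L)
  case 0
  then show ?case unfolding isometric_below_def by simp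
next
  case (Suc L)
  show ?case
    unfolding isometric_below_def
  proof (intro allI impI)
    fix c s t assume C: "bump_cycle c" and st: "s \<le> t" "t \<le> n" and L: "cycle_dist s t < Suc L"
    show "d (c s) (c t) = cycle_dist s t"
    proof (cases "cycle_dist s t < L")
      case True
      then show ?thesis using Suc.IH C st unfolding isometric_below_def by blast
    next
      case False
      then have "cycle_dist s t = L" using L by linarith
      then have IH: "isometric_below (cycle_dist s t)" using Suc.IH by simp
      have "cycle_dist s t \<le> d (c s) (c t)"
      proof (cases "2 * (t - s) \<le> n")
        case True
        then have "cycle_dist s t = t - s" unfolding cycle_dist_def by simp
        then show ?thesis using lower_bound_short_way[OF C _ st True] IH by simp
      next
        case False
        then have "cycle_dist s t = n - (t - s)" unfolding cycle_dist_def by simp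
        then show ?thesis using lower_bound_long_way[OF C _ st] IH False by simp
      qed
      then show ?thesis using d_c_le_cycle_dist[OF C st] by simp
    qed
  qed
qed

lemma bump_cycle_d_eq_cycle_dist:
  "bump_cycle c \<Longrightarrow> s \<le> t \<Longrightarrow> t \<le> n \<Longrightarrow> d (c s) (c t) = cycle_dist s t"
  using bump_cycles_isometric_below[of "Suc (cycle_dist s t)"] unfolding isometric_below_def by blast

lemma bump_cycle_isometric_cycle:
  assumes C: "bump_cycle c"
  shows "isometric_cycle V E (map c [0..<n])"
  unfolding isometric_cycle_def
proof (intro conjI allI impI)
  have j: "j \<ge> 1" using j_ge_1[OF C] .
  show "3 \<le> length (map c [0..<n])" using j m_cases by auto
  show "set (map c [0..<n]) \<subseteq> V" using c_in_V[OF C] by auto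
  have iso: "d (c s) (c t) = cycle_dist s t" if "s \<le> t" "t \<le> n" for s t
    using bump_cycle_d_eq_cycle_dist[OF C that] .
  have "c a \<noteq> c b" if ab: "a < b" "b < n" for a b
  proof
    assume "c a = c b"
    moreover have "1 \<le> cycle_dist a b" using ab unfolding cycle_dist_def by auto
    ultimately show False using iso[of a b] ab d_self c_in_V[OF C, of b] by simp
  qed
  then show "distinct (map c [0..<n])"
    unfolding distinct_conv_nth by (metis length_map length_upt linorder_neqE_nat minus_nat.diff_0
        nth_map_upt plus_nat.add_0)
  fix i assume i: "i < length (map c [0..<n])"
  show "E (map c [0..<n] ! i) (map c [0..<n] ! (Suc i mod length (map c [0..<n])))"
  proof (cases "Suc i < n")
    case True then show ?thesis using c_adj[OF C, of i] i by simp
  next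
    case False
    then have "Suc i = n" using i by simp
    then show ?thesis using c_adj[OF C, of i] c_closed[OF C] i j by simp
  qed
next
  fix i k assume i: "i < length (map c [0..<n])" and k: "k < length (map c [0..<n])"
  have mi: "map c [0..<n] ! i = c i" "map c [0..<n] ! k = c k" "length (map c [0..<n]) = n"
    using i k by auto
  show "d (map c [0..<n] ! i) (map c [0..<n] ! k) =
      min (nat \<bar>int i - int k\<bar>) (length (map c [0..<n]) - nat \<bar>int i - int k\<bar>)"
  proof (cases "i \<le> k")
    case True
    then have e: "nat \<bar>int i - int k\<bar> = k - i" by simp
    show ?thesis
      unfolding mi e using bump_cycle_d_eq_cycle_dist[OF C True] k unfolding cycle_dist_def by simp
  next
    case False
    have e: "nat \<bar>int i - int k\<bar> = i - k" using False by simp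
    have "d (c i) (c k) = d (c k) (c i)" using d_sym c_in_V[OF C] i k by simp
    then show ?thesis
      unfolding mi e using bump_cycle_d_eq_cycle_dist[OF C, of k i] i False unfolding cycle_dist_def
      by simp
  qed
qed

definition glue :: "(nat \<Rightarrow> 'a) \<Rightarrow> (nat \<Rightarrow> 'a) \<Rightarrow> (nat \<Rightarrow> 'a) \<Rightarrow> nat \<Rightarrow> 'a" where
  "glue f T g k = (if k \<le> j then f k else if k \<le> j + m then T (k - j) else g (n - k))"

context
  fixes q T f g
  assumes T: "bump q j m T"
    and f: "f 0 = q" "f j = T 0" "\<And>i. i < j \<Longrightarrow> E (f i) (f (Suc i))"
      "\<And>i. i \<le> j \<Longrightarrow> f i \<in> V \<and> d q (f i) = i"
    and g: "g 0 = q" "g j = T m" "\<And>i. i < j \<Longrightarrow> E (g i) (g (Suc i))"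
      "\<And>i. i \<le> j \<Longrightarrow> g i \<in> V \<and> d q (g i) = i"
begin

lemma bump_height_pos: "1 \<le> j"
proof (rule ccontr)
  assume "\<not> 1 \<le> j"
  then have "j = 0" by simp
  then have "T 0 = q" "T m = q" using f g by auto
  then show False using T d_self unfolding bump_def by auto
qed

lemma glue_adj: "k < n \<Longrightarrow> E (glue f T g k) (glue f T g (Suc k))"
proof -
  assume k: "k < n"
  have TE: "\<And>i. i < m \<Longrightarrow> E (T i) (T (Suc i))" using T unfolding bump_def by blast
  have j1: "1 \<le> j" using bump_height_pos .
  consider "k < j" | "k = j" | "j < k" "k < j+m" | "k = j+m" | "j+m < k" by linarith
  then show ?thesis
  proof cases
    case 1 then show ?thesis using f unfolding glue_def by simp
  next
    case 2 then show ?thesis using f TE[of 0] m_cases unfolding glue_def by auto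
  next
    case 3
    then have "glue f T g k = T (k - j)" "glue f T g (Suc k) = T (Suc (k - j))"
      unfolding glue_def by (auto simp: Suc_diff_le)
    then show ?thesis using TE[of "k-j"] 3 by simp
  next
    case 4
    have "E (g (j-1)) (g j)" using g(3)[of "j-1"] j1 by simp
    moreover have "glue f T g k = T m" "glue f T g (Suc k) = g (j - 1)"
      unfolding glue_def using 4 m_cases by auto
    ultimately show ?thesis using g(2) adj_sym by simp
  next
    case 5
    have "E (g (n - Suc k)) (g (Suc (n - Suc k)))" using g(3) 5 k by simp
    moreover have "Suc (n - Suc k) = n - k" using k by simp
    ultimately show ?thesis using 5 adj_sym unfolding glue_def by simp
  qed
qed

lemma bump_cycle_glue: "bump_cycle (glue f T g)"
  unfolding bump_cycle_def
proof (intro conjI allI impI)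
  have TV: "\<And>i. i \<le> m \<Longrightarrow> T i \<in> V" and Tm: "d q (T m) = j" and TT: "d (T 0) (T m) = m"
    and Tmid: "\<And>i. 0 < i \<Longrightarrow> i < m \<Longrightarrow> d q (T i) = Suc j"
    using T unfolding bump_def by auto
  have c0: "glue f T g 0 = q" using f unfolding glue_def by simp
  show "glue f T g n = glue f T g 0" using f g bump_height_pos m_cases unfolding glue_def by auto
  show "d (glue f T g j) (glue f T g (j + m)) = m" using f TT m_cases unfolding glue_def by auto
  fix k
  show "k < n \<Longrightarrow> E (glue f T g k) (glue f T g (Suc k))" by (rule glue_adj)
  show "k \<le> n \<Longrightarrow> glue f T g k \<in> V"
    using f(4)[of k] TV[of "k - j"] g(4)[of "n - k"] unfolding glue_def by auto
  assume "k \<le> n"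
  then consider "k \<le> j" | "j < k" "k < j+m" | "k = j+m" | "j+m < k" by linarith
  then show "d (glue f T g 0) (glue f T g k) = min k (n - k)"
  proof cases
    case 1 then show ?thesis using f(4) c0 unfolding glue_def by simp
  next
    case 2 then show ?thesis using Tmid[of "k - j"] c0 m_cases unfolding glue_def by auto
  next
    case 3 then show ?thesis using Tm c0 m_cases unfolding glue_def by auto
  next
    case 4 then show ?thesis using g(4)[of "n - k"] c0 \<open>k \<le> n\<close> unfolding glue_def by auto
  qed
qed

end

lemma bump_cycle_exists:
  assumes T: "bump q j m T"
  obtains c where "bump_cycle c"
proof -
  have qV: "q \<in> V" and T0: "T 0 \<in> V" "d q (T 0) = j" and Tm: "T m \<in> V" "d q (T m) = j"
    using T unfolding bump_def by auto
  obtain f where f: "f 0 = q" "f (d q (T 0)) = T 0" "\<And>i. i < d q (T 0) \<Longrightarrow> E (f i) (f (Suc i))"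
    "\<And>i. i \<le> d q (T 0) \<Longrightarrow> f i \<in> V \<and> d q (f i) = i"
    using geodesic_exists[OF qV T0(1)] by blast
  obtain g where g: "g 0 = q" "g (d q (T m)) = T m" "\<And>i. i < d q (T m) \<Longrightarrow> E (g i) (g (Suc i))"
    "\<And>i. i \<le> d q (T m) \<Longrightarrow> g i \<in> V \<and> d q (g i) = i"
    using geodesic_exists[OF qV Tm(1)] by blast
  show ?thesis using that bump_cycle_glue[OF T f[unfolded T0(2)] g[unfolded Tm(2)]] .
qed

section \<open>Bridged graphs and graphs satisfying (J0') and (br) are bump-free\<close>

context
  fixes c assumes C: "bump_cycle c"
begin

lemma replacement_keeps_3_bump_start:
  assumes m3: "m = 3" and w: "E w (c (j+1))" "d (c 0) w = j"
  shows "d w (c (j+3)) = 3"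
proof -
  have "d ((\<lambda>k. c (n - k)) j) w = 3"
  proof (rule replacement_keeps_3_bump[OF bump_cycle_reflect[OF C] m3])
    show "E w ((\<lambda>k. c (n - k)) (j + 2))" using w(1) m3 by simp
    show "d ((\<lambda>k. c (n - k)) 0) w = j" using w(2) c_closed[OF C] by simp
  qed
  then show ?thesis using m3 d_sym adj_in_V1[OF w(1)] c_in_V[OF C, of "j+3"] by simp
qed

lemma J0'_witness:
  assumes J: "axiom_J0' V (interval V E)" and jj: "2 \<le> j"
  obtains w where "E (c (j-1)) w" "E w (c (j+1))" "w \<noteq> c j"
    "d (c j) w + d w (c (2*j+1)) = Suc j" "d w (c (j+2)) = 2"
proof -
  have iso: "d (c s) (c t) = cycle_dist s t" if "s \<le> t" "t \<le> n" for s t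
    using bump_cycle_d_eq_cycle_dist[OF C that] .
  have V: "c (j-1) \<in> V" "c j \<in> V" "c (j+1) \<in> V" "c (2*j+1) \<in> V" "c (j+2) \<in> V"
    using c_in_V[OF C] m_ge_2 by auto
  have "m \<le> 3" using m_cases by auto
  then have D: "d (c (j-1)) (c j) = 1" "d (c j) (c (j+1)) = 1" "d (c (j-1)) (c (j+1)) = 2"
    "d (c j) (c (2*j+1)) = Suc j" "d (c (j+1)) (c (2*j+1)) = j" "d (c (j-1)) (c (2*j+1)) = j + m - 2"
    "d (c (j-1)) (c (j+2)) = 3" "d (c (j+1)) (c (j+2)) = 1"
    using iso[of "j-1" j] iso[of j "j+1"] iso[of "j-1" "j+1"] iso[of j "2*j+1"] iso[of "j+1" "2*j+1"]
      iso[of "j-1" "2*j+1"] iso[of "j-1" "j+2"] iso[of "j+1" "j+2"] jj m_ge_2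
    unfolding cycle_dist_def by auto
  have "d (c (j-1)) (c (2*j+1)) \<noteq> 0" using D(6) jj m_ge_2 by simp
  then have dis: "distinct [c (j-1), c j, c (j+1), c (2*j+1)]" using D d_self V by auto
  have "m \<le> 3" using m_cases by auto
  then have "c j \<in> interval V E (c (j-1)) (c (j+1))" "c (j+1) \<in> interval V E (c j) (c (2*j+1))"
    "c j \<notin> interval V E (c (j-1)) (c (2*j+1))"
    using D V unfolding mem_interval by simp_all
  then have "\<not> interval V E (c (j-1)) (c (j+1)) \<inter> interval V E (c j) (c (2*j+1))
      \<subseteq> {c (j-1), c j, c (j+1), c (2*j+1)}"
    using J[unfolded axiom_J0'_def, rule_format, OF V(1-4) dis] by blast
  then obtain w where w: "w \<in> interval V E (c (j-1)) (c (j+1))" "w \<in> interval V E (c j) (c (2*j+1))"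
    "w \<noteq> c (j-1)" "w \<noteq> c j" "w \<noteq> c (j+1)"
    by blast
  have wV: "w \<in> V" and aw: "d (c (j-1)) w + d w (c (j+1)) = 2"
    and jwb: "d (c j) w + d w (c (2*j+1)) = Suc j"
    using w(1,2) D unfolding mem_interval by auto
  have "d (c (j-1)) w \<noteq> 0" "d w (c (j+1)) \<noteq> 0" using d_eq_0D V wV w(3,5) by metis+
  then have "d (c (j-1)) w = 1" "d w (c (j+1)) = 1" using aw by linarith+
  moreover have "d (c (j-1)) (c (j+2)) \<le> d (c (j-1)) w + d w (c (j+2))"
    "d w (c (j+2)) \<le> d w (c (j+1)) + d (c (j+1)) (c (j+2))"
    using d_triangle V wV by blast+
  ultimately have "E (c (j-1)) w" "E w (c (j+1))" "d w (c (j+2)) = 2"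
    using adj_if_d_eq_1 V wV D(7,8) by auto
  then show ?thesis using that w(4) jwb by blast
qed

text \<open>The witness of (J0') either closes a smaller bump or replaces \<open>c j\<close> to give a bump
  cycle that is not isometric.\<close>
lemma not_axiom_J0':
  assumes jj: "2 \<le> j"
  shows "\<not> axiom_J0' V (interval V E)"
proof
  assume "axiom_J0' V (interval V E)"
  then obtain w where w: "E (c (j-1)) w" "E w (c (j+1))" "w \<noteq> c j"
    and jwb: "d (c j) w + d w (c (2*j+1)) = Suc j" and w2: "d w (c (j+2)) = 2"
    using J0'_witness jj by blast
  have wV: "w \<in> V" using w adj_in_V2 by blast
  have V: "c (j-1) \<in> V" "c j \<in> V" "c (j+1) \<in> V" "c (j+2) \<in> V" "c (2*j+1) \<in> V"
    using c_in_V[OF C] m_ge_2 by auto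
  have "d (c j) w \<le> d (c j) (c (j-1)) + d (c (j-1)) w" using d_triangle V wV by blast
  moreover have "d (c j) (c (j-1)) = 1" "d (c (j-1)) w = 1"
    using d_adj_both c_adj[OF C, of "j-1"] w(1) jj by auto
  moreover have "d (c j) w \<noteq> 0" using d_eq_0D V wV w(3) by fastforce
  ultimately consider "d (c j) w = 2" | "d (c j) w = 1" by linarith
  then show False
  proof cases
    case 1
    have "m \<le> 3" using m_cases by auto
    then have "d (c (2*j+1)) (c (j+2)) = j - 1" "d (c (2*j+1)) (c (j+1)) = Suc (j - 1)"
      using bump_cycle_d_eq_cycle_dist[OF C, of "j+2" "2*j+1"]
        bump_cycle_d_eq_cycle_dist[OF C, of "j+1" "2*j+1"] d_sym V jj m_ge_2
      unfolding cycle_dist_def by auto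
    moreover have "d (c (2*j+1)) w = j - 1" using 1 jwb d_sym V wV by simp
    moreover have "E (c (j+1)) (c (j+2))" using c_adj[OF C, of "j+1"] m_ge_2 by simp
    ultimately have "n \<le> 2 * (j - 1) + 2" using n_le_bump_2[OF V(5) _ _ _ w(2) _ w2] by blast
    then show False using jj m_ge_2 by simp
  next
    case 2
    then have wb: "d w (c (2*j+1)) = j" using jwb by simp
    have lev: "d (c 0) w = min j (n - j)"
      by (rule replacement_level[OF C]) (use w jj in simp_all)
    have "d w (c (j+m)) = m"
      using w2 replacement_keeps_3_bump_start[OF _ w(2)] lev m_cases by auto
    then have "bump_cycle (c(j := w))"
      by (intro bump_cycle_replace[OF C]) (use w lev jj m_ge_2 in simp_all)
    then have "d w (c (2*j+1)) = cycle_dist j (2*j+1)"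
      using bump_cycle_d_eq_cycle_dist[of "c(j := w)" j "2*j+1"] m_ge_2 by simp
    then show False using wb m_ge_2 unfolding cycle_dist_def by auto
  qed
qed

lemma not_axiom_br_if_square:
  assumes m2: "m = 2" and j1: "j = 1"
  shows "\<not> axiom_br V (interval V E)"
proof
  assume br: "axiom_br V (interval V E)"
  have V: "c 0 \<in> V" "c 1 \<in> V" "c 2 \<in> V" "c 3 \<in> V" using c_in_V[OF C] m2 j1 by auto
  have D: "d (c 0) (c 1) \<le> 1" "d (c 0) (c 3) \<le> 1" "d (c 0) (c 2) = 2" "d (c 1) (c 3) = 2"
    "d (c 1) (c 2) = 1" "d (c 2) (c 3) = 1"
    using c_level[OF C, of 1] c_level[OF C, of 3] c_level[OF C, of 2] c_bump[OF C]
      d_adj[OF c_adj[OF C, of 1]] d_adj[OF c_adj[OF C, of 2]] m2 j1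
    by (simp_all add: numeral_2_eq_2 numeral_3_eq_3)
  have "interval V E (c 0) (c 0) = {c 0, c 0}"
    using interval_eq_ends_iff[OF V(1) V(1)] d_self[OF V(1)] by simp
  moreover have "interval V E (c 0) (c 1) = {c 0, c 1}" "interval V E (c 3) (c 0) = {c 3, c 0}"
    using interval_eq_ends_iff V D d_sym by auto
  moreover have "c 2 \<in> interval V E (c 1) (c 3)" using mem_interval V D by simp
  ultimately have "interval V E (c 0) (c 2) = {c 0, c 2}"
    using br[unfolded axiom_br_def, rule_format, of "c 1" "c 3" "c 0" "c 0" "c 2"] V by blast
  then show False using interval_eq_ends_iff[OF V(1,3)] D by simp
qed

end
end

context conn_graph
begin

lemma C5_free_if_axiom_br:
  assumes br: "axiom_br V (interval V E)"
  shows "C5_free"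
  unfolding C5_free_def
proof (intro allI impI notI)
  fix cs assume cs: "isometric_cycle V E cs" and l5: "length cs = 5"
  define c where "c = (\<lambda>i. cs ! i)"
  have dist: "d (c i) (c k) = min (k - i) (5 - (k - i))" if "i \<le> k" "k < 5" for i k
    using isometric_cycleD(2)[OF cs, of i k] that l5 unfolding c_def by simp
  have V: "c i \<in> V" if "i < 5" for i
    using isometric_cycleD(3)[OF cs, of i] that l5 unfolding c_def by simp
  have "d (c 0) (c 1) = 1" "d (c 0) (c 4) = 1" "d (c 1) (c 2) = 1" "d (c 3) (c 4) = 1"
    "d (c 2) (c 3) = 1" "d (c 2) (c 4) = 2" "d (c 0) (c 3) = 2" "d (c 1) (c 3) = 2"
    using dist[of 0 1] dist[of 0 4] dist[of 1 2] dist[of 3 4] dist[of 2 3] dist[of 2 4]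
      dist[of 0 3] dist[of 1 3] by simp_all
  moreover have "c 0 \<in> V" "c 1 \<in> V" "c 2 \<in> V" "c 3 \<in> V" "c 4 \<in> V" using V by simp_all
  ultimately have "interval V E (c 0) (c 1) = {c 0, c 1}" "interval V E (c 0) (c 4) = {c 0, c 4}"
    "interval V E (c 2) (c 1) = {c 2, c 1}" "c 3 \<in> interval V E (c 4) (c 2)"
    "interval V E (c 0) (c 3) \<noteq> {c 0, c 3}" "interval V E (c 1) (c 3) \<noteq> {c 1, c 3}"
    using interval_eq_ends_iff mem_interval d_sym by simp_all
  then show False
    using br[unfolded axiom_br_def, rule_format, of "c 4" "c 2" "c 0" "c 1" "c 3"] V by simp
qed

lemma C5_free_if_bridged: "bridged V E \<Longrightarrow> C5_free"
  unfolding bridged_def C5_free_def by fastforce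

lemma minimal_bump_exists:
  assumes "\<not> bump_free" and "C5_free"
  obtains q j m T where "bump q j m T" "minimal_bump V E j m"
proof -
  define P where "P = (\<lambda>N. \<exists>q j m T. bump q j m T \<and> N = 2*j+m)"
  have "\<exists>N. P N" using assms(1) unfolding bump_free_def P_def by blast
  then have "P (LEAST N. P N)" by (rule LeastI_ex)
  then obtain q j m T where T: "bump q j m T" and N: "(LEAST N. P N) = 2*j+m"
    unfolding P_def by blast
  have "no_bump_below (2*j+m)"
    unfolding no_bump_below_def
  proof (intro allI impI)
    fix q' j' m' T' assume "bump q' j' m' T'"
    then have "P (2*j'+m')" unfolding P_def by blast
    then show "2*j+m \<le> 2*j'+m'" unfolding N[symmetric] by (rule Least_le)
  qed
  moreover have "m = 2 \<or> m = 3" using T unfolding bump_def by blast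
  ultimately have "minimal_bump V E j m"
    using assms(2) by (intro minimal_bump.intro minimal_bump_axioms.intro conn_graph_axioms)
  then show ?thesis using that T by blast
qed

theorem bump_free_if_bridged:
  assumes "bridged V E"
  shows "bump_free"
proof (rule ccontr)
  assume "\<not> bump_free"
  then obtain q j m T where T: "bump q j m T" and M: "minimal_bump V E j m"
    using minimal_bump_exists C5_free_if_bridged assms by blast
  interpret minimal_bump V E j m by (rule M)
  obtain c where C: "bump_cycle c" using bump_cycle_exists[OF T] by blast
  have "length (map c [0..<2*j+m]) \<le> 3"
    using bump_cycle_isometric_cycle[OF C] assms unfolding bridged_def by blast
  then show False using j_ge_1[OF C] m_ge_2 by simp
qed

theorem bump_free_if_axioms:
  assumes J: "axiom_J0' V (interval V E)" and br: "axiom_br V (interval V E)"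
  shows "bump_free"
proof (rule ccontr)
  assume "\<not> bump_free"
  then obtain q j m T where T: "bump q j m T" and M: "minimal_bump V E j m"
    using minimal_bump_exists C5_free_if_axiom_br br by blast
  interpret minimal_bump V E j m by (rule M)
  obtain c where C: "bump_cycle c" using bump_cycle_exists[OF T] by blast
  show False
  proof (cases "m = 2 \<and> j = 1")
    case True
    then show False using not_axiom_br_if_square[OF C] br by blast
  next
    case False
    then have "2 \<le> j" using j_ge_1[OF C] j_ge_2_if_m_3[OF C] m_cases by fastforce
    then show False using not_axiom_J0'[OF C] J by blast
  qed
qed

end

theorem theorem7:
  fixes V :: "'a set" and E :: "'a \<Rightarrow> 'a \<Rightarrow> bool"
  assumes "connected_graph V E"
  shows "(axiom_J0' V (interval V E) \<and> axiom_br V (interval V E)) \<longleftrightarrow> bridged V E"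
proof -
  interpret conn_graph V E by (rule conn_graph.intro) (rule assms)
  show ?thesis
  proof
    assume "axiom_J0' V (interval V E) \<and> axiom_br V (interval V E)"
    then show "bridged V E"
      using bridged_if_bump_free bump_free_if_axioms C5_free_if_axiom_br by blast
  next
    assume bridged: "bridged V E"
    then have "bump_free" "C5_free" using bump_free_if_bridged C5_free_if_bridged by blast+
    then show "axiom_J0' V (interval V E) \<and> axiom_br V (interval V E)"
      using axiom_J0'_if_bump_free axiom_br_if_bump_free by blast
  qed
qed

end
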